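(* In the setting of the context, with $0<p_{A|X}(x)<1$ for all $x$, let $U=\{U_1,\dots,U_L\}$ be a partition of $[n]$ that is conditionally independent of $Y_{1:n}$ given $(X_{1:n},A_{1:n})$ and is a function of $(B_{1:n},A_{1:n})$ and independent randomness. For each $l$ with $N_l^0=|U_l\cap I_{A=0}|\ge1$, let $\hat C^l$ be the set $\hat C^{\mathrm{pro}}$ (defined in the context) computed from the data indexed by $U_l\cup I_{A=1}$ only (all bin counts and $N^{(0)}$ computed within this subset, with the same bins $D_k$). For $i\in I_{A=0}$ let $l_i$ be the index with $i\in U_{l_i}$ and set $\hat C^{\mathrm{pro}}_U(X_i,i)=\hat C^{l_i}(X_i)$. Then $$\mathbb E\Big[\frac{1}{N^{(0)}}\sum_{i\in I_{A=0}}\mathbf 1\{Y_i\in\hat C^{\mathrm{pro}}_U(X_i,i)\}\ \Big|\ B_{1:n},A_{1:n}\Big]\ge1-\alpha-\varepsilon.$$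
   Context: Missing-at-random setting: $(X_i,Y_i,A_i)_{1\le i\le n}$ i.i.d. with $X\sim P_X$, $Y\mid X\sim P_{Y|X}$, $A\mid X\sim\mathrm{Bernoulli}(p_{A|X}(X))$, $A\perp Y\mid X$; observed data $(X_i,A_i,Y_iA_i)$; $p_{A|X}(x)=\mathbb P(A=1|X=x)$. $I_{A=0}=\{i:A_i=0\}$, $I_{A=1}=\{i:A_i=1\}$, $N^{(0)}=|I_{A=0}|$. $s$ is a fixed measurable score, $S_i=s(X_i,Y_i)$. Discretization: $\varepsilon>0$, $z_k=(1+\varepsilon)^k/(1+(1+\varepsilon)^k)$, $D_k=\{x:p_{A|X}(x)\in[z_k,z_{k+1})\}$, $B_i$ = the $k$ with $X_i\in D_k$. For a dataset with bins $B'_1,\dots,B'_M$ (distinct values of the $B_i$ present), $I_k^{\mathcal B}$, $I_k^{\mathcal B,0}$, $I_k^{\mathcal B,1}$ are the indices in bin $k$, those with $A=0$, those with $A=1$, with sizes $N_k^{\mathcal B},N_k^{\mathcal B,0}$; then $\hat C^{\mathrm{pro}}(x)=\{y:s(x,y)\le Q_{1-\alpha}(\sum_k\sum_{i\in I_k^{\mathcal B,1}}\frac{N_k^{\mathcal B,0}}{N^{(0)}N_k^{\mathcal B}}\delta_{S_i}+\frac1{N^{(0)}}\sum_k\frac{(N_k^{\mathcal B,0})^2}{N_k^{\mathcal B}}\delta_{+\infty})\}$, where $Q_{1-\alpha}(P)=\inf\{t:\mathbb P_{T\sim P}(T\le t)\ge1-\alpha\}$. Coverage proportions over empty index sets are $1$.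 *)

theory Defs
  imports "HOL-Probability.Probability"
begin

definition zgrid :: "real \<Rightarrow> int \<Rightarrow> real" where
  "zgrid eps k = (1 + eps) powi k / (1 + (1 + eps) powi k)"

definition bin_of :: "real \<Rightarrow> real \<Rightarrow> int" where
  "bin_of eps q = (THE k. zgrid eps k \<le> q \<and> q < zgrid eps (k + 1))"

definition Nbin :: "nat set \<Rightarrow> (nat \<Rightarrow> int) \<Rightarrow> int \<Rightarrow> nat" where
  "Nbin J b k = card {i \<in> J. b i = k}"

definition Nbin0 :: "nat set \<Rightarrow> (nat \<Rightarrow> int) \<Rightarrow> (nat \<Rightarrow> bool) \<Rightarrow> int \<Rightarrow> nat" where
  "Nbin0 J b a k = card {i \<in> J. b i = k \<and> \<not> a i}"

definition Nzero :: "nat set \<Rightarrow> (nat \<Rightarrow> bool) \<Rightarrow> nat" where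
  "Nzero J a = card {i \<in> J. \<not> a i}"

text \<open>CDF t |-> P(T <= t) of the weighted empirical distribution in the definition of C^pro,
  computed from the data indexed by J; S are the scores (only used for indices with a i).\<close>
definition pro_cdf :: "nat set \<Rightarrow> (nat \<Rightarrow> int) \<Rightarrow> (nat \<Rightarrow> bool) \<Rightarrow> (nat \<Rightarrow> real) \<Rightarrow> ereal \<Rightarrow> real" where
  "pro_cdf J b a S t =
     (\<Sum>i\<in>{i \<in> J. a i}. if ereal (S i) \<le> t
        then real (Nbin0 J b a (b i)) / (real (Nzero J a) * real (Nbin J b (b i))) else 0)
   + (if \<infinity> \<le> t then (1 / real (Nzero J a)) *
        (\<Sum>k\<in>b ` J. real (Nbin0 J b a k) ^ 2 / real (Nbin J b k)) else 0)"

definition pro_thr :: "real \<Rightarrow> nat set \<Rightarrow> (nat \<Rightarrow> int) \<Rightarrow> (nat \<Rightarrow> bool) \<Rightarrow> (nat \<Rightarrow> real) \<Rightarrow> ereal" where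
  "pro_thr alpha J b a S = Inf {t. pro_cdf J b a S t \<ge> 1 - alpha}"

definition C_pro :: "real \<Rightarrow> nat set \<Rightarrow> (nat \<Rightarrow> int) \<Rightarrow> (nat \<Rightarrow> bool) \<Rightarrow> (nat \<Rightarrow> real)
    \<Rightarrow> ('x \<Rightarrow> 'y \<Rightarrow> real) \<Rightarrow> 'x \<Rightarrow> 'y set" where
  "C_pro alpha J b a S s x = {y. ereal (s x y) \<le> pro_thr alpha J b a S}"

text \<open>Coverage proportion over I_{A=0} of the partition-based sets C^pro_U, where the partition
  U of {..<n} is given by labels lab (U_l = {j<n. lab j = l}). Empty I_{A=0} gives 1.\<close>
definition cov_U :: "real \<Rightarrow> nat \<Rightarrow> (nat \<Rightarrow> nat) \<Rightarrow> (nat \<Rightarrow> int) \<Rightarrow> (nat \<Rightarrow> bool)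
    \<Rightarrow> ('x \<Rightarrow> 'y \<Rightarrow> real) \<Rightarrow> (nat \<Rightarrow> 'x) \<Rightarrow> (nat \<Rightarrow> 'y) \<Rightarrow> real" where
  "cov_U alpha n lab b a s X Y =
    (let I0 = {i \<in> {..<n}. \<not> a i}; I1 = {i \<in> {..<n}. a i}; S = (\<lambda>i. s (X i) (Y i)) in
     if I0 = {} then 1
     else (1 / real (card I0)) *
       (\<Sum>i\<in>I0. if Y i \<in> C_pro alpha ({j \<in> {..<n}. lab j = lab i} \<union> I1) b a S s (X i)
                  then 1 else 0))"

end

theory Submission
  imports Defs
begin

text \<open>Fix the bins b and the missingness pattern a. Within a bin the odds of the propensities differ
  by a factor at most 1 + eps, so, integrating out the missingness indicators (missing at random),
  exchanging the data of an unobserved index with those of another index of the same bin changes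
  probabilities by at most that factor. Consider the oracle quantile in which the unobserved scores
  themselves replace the atom at infinity. The probability that an unobserved index lies above it is
  then at most 1 + eps times its pro_weight-average over all indices, and that average is at most
  alpha times the probability of the pattern, by the definition of a quantile. As C^pro contains the
  oracle set, summing over the unobserved indices of each block gives the bound for a fixed
  partition; the partition is independent of the data given (b, a) and is averaged out block by block.\<close>

section \<open>Propensity bins\<close>

lemma zgrid_le_iff_odds:
  fixes eps q :: real
  assumes q: "0 < q" "q < 1" and eps: "0 < eps"
  shows "zgrid eps k \<le> q \<longleftrightarrow> (1 + eps) powi k \<le> q / (1 - q)"
    and "q < zgrid eps k \<longleftrightarrow> q / (1 - q) < (1 + eps) powi k"
proof -
  have "0 < (1 + eps) powi k" using eps by (intro zero_less_power_int) auto
  then show "zgrid eps k \<le> q \<longleftrightarrow> (1 + eps) powi k \<le> q / (1 - q)"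
    and "q < zgrid eps k \<longleftrightarrow> q / (1 - q) < (1 + eps) powi k"
    using q unfolding zgrid_def by (auto simp: field_simps)
qed

lemma ex_power_int_bracket:
  fixes c r :: real
  assumes c: "1 < c" and r: "0 < r"
  shows "\<exists>k. c powi k \<le> r \<and> r < c powi (k + 1)"
proof -
  define L where "L = ln c"
  have L: "0 < L" unfolding L_def using c by simp
  define k where "k = \<lfloor>ln r / L\<rfloor>"
  have powi_exp: "c powi m = exp (real_of_int m * L)" for m
    using c unfolding L_def by (simp add: powr_real_of_int'[symmetric] powr_def)
  have "real_of_int k * L \<le> ln r"
    using L unfolding k_def by (metis floor_divide_lower)
  then have "c powi k \<le> r" unfolding powi_exp using r by (metis exp_le_cancel_iff exp_ln)
  moreover have "ln r < real_of_int (k + 1) * L"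
    using L unfolding k_def by (metis floor_divide_upper of_int_1 of_int_add)
  then have "r < c powi (k + 1)" unfolding powi_exp using r by (metis exp_less_cancel_iff exp_ln)
  ultimately show ?thesis by blast
qed

lemma power_int_bracket_unique:
  fixes c r :: real
  assumes c: "1 < c"
    and "c powi k \<le> r" "r < c powi (k + 1)" and "c powi k' \<le> r" "r < c powi (k' + 1)"
  shows "k = k'"
proof (rule ccontr)
  have mono: "c powi (m + 1) \<le> c powi m'" if "m + 1 \<le> m'" for m m'
    using that c by (intro power_int_increasing) auto
  assume "k \<noteq> k'"
  then have "k + 1 \<le> k' \<or> k' + 1 \<le> k" by linarith
  then show False using mono assms by (meson leD order.strict_trans1 order.trans)
qed

lemma bin_of_eq_iff:
  fixes eps q :: real
  assumes q: "0 < q" "q < 1" and eps: "0 < eps"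
  shows "bin_of eps q = k \<longleftrightarrow> (1 + eps) powi k \<le> q / (1 - q) \<and> q / (1 - q) < (1 + eps) powi (k + 1)"
proof -
  have c: "1 < 1 + eps" using eps by simp
  have grid_iff: "(zgrid eps m \<le> q \<and> q < zgrid eps (m + 1)) \<longleftrightarrow>
      (1 + eps) powi m \<le> q / (1 - q) \<and> q / (1 - q) < (1 + eps) powi (m + 1)" for m
    using zgrid_le_iff_odds[OF q eps] by simp
  obtain k0 where k0: "(1 + eps) powi k0 \<le> q / (1 - q) \<and> q / (1 - q) < (1 + eps) powi (k0 + 1)"
    using ex_power_int_bracket[OF c] q by fastforce
  have "bin_of eps q = k0"
    unfolding bin_of_def grid_iff
    by (rule the_equality) (use k0 power_int_bracket_unique[OF c] in blast)+
  then show ?thesis using k0 power_int_bracket_unique[OF c] by blast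
qed

text \<open>The only place where the discretisation enters the coverage bound.\<close>
lemma odds_le_if_same_bin:
  fixes eps q q' :: real
  assumes eps: "0 < eps" and q: "0 < q" "q < 1" and q': "0 < q'" "q' < 1"
    and "bin_of eps q = k" "bin_of eps q' = k"
  shows "(1 - q) * q' \<le> (1 + eps) * ((1 - q') * q)"
proof -
  have "(1 + eps) powi k \<le> q / (1 - q)" using assms bin_of_eq_iff[OF q eps] by blast
  moreover have "q' / (1 - q') < (1 + eps) powi (k + 1)" using assms bin_of_eq_iff[OF q' eps] by blast
  moreover have "(1 + eps) powi (k + 1) = (1 + eps) * (1 + eps) powi k"
    using eps by (simp add: power_int_add)
  ultimately have "q' / (1 - q') \<le> (1 + eps) * (q / (1 - q))"
    using eps by (smt (verit) mult_left_mono)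
  then show ?thesis using q q' eps by (simp add: field_simps)
qed

lemma measurable_bin_of:
  assumes eps: "0 < eps" and p: "p \<in> borel_measurable MX" and p_range: "\<And>x. 0 < p x \<and> p x < 1"
  shows "(\<lambda>x. bin_of eps (p x)) \<in> measurable MX (count_space UNIV)"
proof (subst measurable_count_space_eq2_countable, safe)
  fix k :: int
  have "(\<lambda>x. bin_of eps (p x)) -` {k} \<inter> space MX =
    {x \<in> space MX. (1 + eps) powi k \<le> p x / (1 - p x) \<and> p x / (1 - p x) < (1 + eps) powi (k + 1)}"
    using bin_of_eq_iff[OF _ _ eps] p_range by auto
  also have "\<dots> \<in> sets MX" using p by measurable
  finally show "(\<lambda>x. bin_of eps (p x)) -` {k} \<inter> space MX \<in> sets MX" .
qed auto

section \<open>Weighted quantiles\<close>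

text \<open>The mass that pro_cdf puts on the score of an observed index q. Extended to all of J it sums to 1:
  the unobserved indices account exactly for the atom at infinity.\<close>
definition pro_weight :: "nat set \<Rightarrow> (nat \<Rightarrow> int) \<Rightarrow> (nat \<Rightarrow> bool) \<Rightarrow> nat \<Rightarrow> real" where
  "pro_weight J b a q = real (Nbin0 J b a (b q)) / (real (Nzero J a) * real (Nbin J b (b q)))"

lemma pro_weight_nonneg: "0 \<le> pro_weight J b a q"
  unfolding pro_weight_def by simp

lemma ereal_le_pro_thr_iff:
  assumes J: "finite J" and alpha: "alpha < 1"
  shows "ereal v \<le> pro_thr alpha J b a S \<longleftrightarrow>
     (\<Sum>q\<in>{q\<in>J. a q}. if S q < v then pro_weight J b a q else 0) < 1 - alpha"
proof -
  let ?W = "\<Sum>q\<in>{q\<in>J. a q}. if S q < v then pro_weight J b a q else 0"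
  have cdf: "pro_cdf J b a S t = (\<Sum>q\<in>{q\<in>J. a q}. if ereal (S q) \<le> t then pro_weight J b a q else 0)"
    if "t < ereal v" for t
    using that unfolding pro_cdf_def pro_weight_def by auto
  have "ereal v \<le> pro_thr alpha J b a S \<longleftrightarrow> (\<forall>t. 1 - alpha \<le> pro_cdf J b a S t \<longrightarrow> ereal v \<le> t)"
    unfolding pro_thr_def by (auto simp: le_Inf_iff)
  also have "\<dots> \<longleftrightarrow> \<not> (\<exists>t<ereal v. 1 - alpha \<le> pro_cdf J b a S t)"
    using not_le by blast
  also have "(\<exists>t<ereal v. 1 - alpha \<le> pro_cdf J b a S t) \<longleftrightarrow> 1 - alpha \<le> ?W"
  proof
    assume "\<exists>t<ereal v. 1 - alpha \<le> pro_cdf J b a S t"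
    then obtain t where t: "t < ereal v" "1 - alpha \<le> pro_cdf J b a S t" by blast
    have "S q < v" if "ereal (S q) \<le> t" for q
      using le_less_trans[OF that t(1)] by simp
    then have "pro_cdf J b a S t \<le> ?W"
      unfolding cdf[OF t(1)] by (intro sum_mono) (auto simp: pro_weight_nonneg)
    then show "1 - alpha \<le> ?W" using t by linarith
  next
    assume W: "1 - alpha \<le> ?W"
    define Q where "Q = {q\<in>J. a q \<and> S q < v}"
    have "Q \<noteq> {}"
    proof
      assume "Q = {}"
      then have "?W = 0" unfolding Q_def by (intro sum.neutral) auto
      then show False using W alpha by linarith
    qed
    moreover have "finite Q" using J unfolding Q_def by auto
    ultimately have m: "Max (S ` Q) \<in> S ` Q" "\<And>q. q \<in> Q \<Longrightarrow> S q \<le> Max (S ` Q)" by auto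
    \<comment> \<open>the largest observed score below v is a threshold below v at which the cdf already reaches ?W\<close>
    have "?W \<le> (\<Sum>q\<in>{q\<in>J. a q}. if ereal (S q) \<le> ereal (Max (S ` Q)) then pro_weight J b a q else 0)"
      by (intro sum_mono) (use m in \<open>auto simp: pro_weight_nonneg Q_def\<close>)
    also have "\<dots> = pro_cdf J b a S (ereal (Max (S ` Q)))"
      using cdf m(1) by (auto simp: Q_def)
    finally show "\<exists>t<ereal v. 1 - alpha \<le> pro_cdf J b a S t"
      using W m(1) by (intro exI[of _ "ereal (Max (S ` Q))"]) (auto simp: Q_def)
  qed
  finally show ?thesis by (simp add: not_le)
qed

lemma pro_thr_cong:
  assumes "\<And>q. q \<in> J \<Longrightarrow> b q = b' q \<and> a q = a' q \<and> S q = S' q"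
  shows "pro_thr alpha J b a S = pro_thr alpha J b' a' S'"
proof -
  have "{i \<in> J. b i = k} = {i \<in> J. b' i = k}" for k using assms by auto
  then have N: "Nbin J b k = Nbin J b' k" for k unfolding Nbin_def by simp
  have "{i \<in> J. b i = k \<and> \<not> a i} = {i \<in> J. b' i = k \<and> \<not> a' i}" for k using assms by auto
  then have N0: "Nbin0 J b a k = Nbin0 J b' a' k" for k unfolding Nbin0_def by simp
  have "{i \<in> J. \<not> a i} = {i \<in> J. \<not> a' i}" using assms by auto
  then have Z: "Nzero J a = Nzero J a'" unfolding Nzero_def by simp
  have im: "b ` J = b' ` J" using assms by (auto simp: image_def)
  have obs: "{i \<in> J. a i} = {i \<in> J. a' i}" using assms by auto
  have "pro_cdf J b a S t = pro_cdf J b' a' S' t" for t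
    unfolding pro_cdf_def im Z obs
  proof (rule arg_cong2[where f="(+)"])
    show "(\<Sum>i\<in>{i \<in> J. a' i}. if ereal (S i) \<le> t
          then real (Nbin0 J b a (b i)) / (real (Nzero J a') * real (Nbin J b (b i))) else 0)
      = (\<Sum>i\<in>{i \<in> J. a' i}. if ereal (S' i) \<le> t
          then real (Nbin0 J b' a' (b' i)) / (real (Nzero J a') * real (Nbin J b' (b' i))) else 0)"
      by (rule sum.cong[OF refl]) (use assms in \<open>simp add: N N0\<close>)
  qed (simp add: N N0)
  then show ?thesis unfolding pro_thr_def by simp
qed

lemma Nbin_pos: "finite J \<Longrightarrow> i \<in> J \<Longrightarrow> 0 < Nbin J b (b i)"
  unfolding Nbin_def by (subst card_gt_0_iff) auto

lemma sum_bin_averages_over_unobserved: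
  assumes J: "finite J"
  shows "(\<Sum>i\<in>{i\<in>J. \<not> a i}. (\<Sum>q\<in>{q\<in>J. b q = b i}. P q) / real (Nbin J b (b i)))
       = (\<Sum>q\<in>J. real (Nbin0 J b a (b q)) * P q / real (Nbin J b (b q)))"
proof -
  have "(\<Sum>i\<in>{i\<in>J. \<not> a i}. (\<Sum>q\<in>{q\<in>J. b q = b i}. P q) / real (Nbin J b (b i)))
      = (\<Sum>i\<in>{i\<in>J. \<not> a i}. \<Sum>q\<in>J. if b q = b i then P q / real (Nbin J b (b q)) else 0)"
    by (intro sum.cong refl)
      (simp add: sum_divide_distrib sum.inter_filter[OF J, symmetric] cong: if_cong)
  also have "\<dots> = (\<Sum>q\<in>J. \<Sum>i\<in>{i\<in>J. \<not> a i}. if b q = b i then P q / real (Nbin J b (b q)) else 0)"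
    by (rule sum.swap)
  also have "\<dots> = (\<Sum>q\<in>J. real (Nbin0 J b a (b q)) * P q / real (Nbin J b (b q)))"
  proof (intro sum.cong refl)
    fix q
    have "{i\<in>{i\<in>J. \<not> a i}. b q = b i} = {i \<in> J. b i = b q \<and> \<not> a i}" by auto
    then show "(\<Sum>i\<in>{i\<in>J. \<not> a i}. if b q = b i then P q / real (Nbin J b (b q)) else 0)
        = real (Nbin0 J b a (b q)) * P q / real (Nbin J b (b q))"
      using J by (simp add: sum.inter_filter[symmetric] Nbin0_def)
  qed
  finally show ?thesis .
qed

lemma sum_pro_weight:
  assumes J: "finite J" and N: "0 < Nzero J a"
  shows "(\<Sum>q\<in>J. pro_weight J b a q) = 1"
proof -
  have bin_avg_1: "(\<Sum>q\<in>{q\<in>J. b q = b i}. 1::real) / real (Nbin J b (b i)) = 1" if "i \<in> J" for i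
  proof -
    have "(\<Sum>q\<in>{q\<in>J. b q = b i}. 1::real) = real (Nbin J b (b i))" unfolding Nbin_def by simp
    then show ?thesis using Nbin_pos[OF J that, of b] by simp
  qed
  have "(\<Sum>i\<in>{i\<in>J. \<not> a i}. (\<Sum>q\<in>{q\<in>J. b q = b i}. 1::real) / real (Nbin J b (b i)))
     = (\<Sum>i\<in>{i\<in>J. \<not> a i}. 1)"
    by (rule sum.cong[OF refl], rule bin_avg_1) simp
  also have "\<dots> = real (Nzero J a)" unfolding Nzero_def by simp
  finally have "(\<Sum>i\<in>{i\<in>J. \<not> a i}. (\<Sum>q\<in>{q\<in>J. b q = b i}. 1::real) / real (Nbin J b (b i)))
     = real (Nzero J a)" .
  then have "(\<Sum>q\<in>J. real (Nbin0 J b a (b q)) / real (Nbin J b (b q))) = real (Nzero J a)"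
    using sum_bin_averages_over_unobserved[OF J, where a=a and b=b and P="\<lambda>_. 1"] by simp
  moreover have "(\<Sum>q\<in>J. pro_weight J b a q)
     = (\<Sum>q\<in>J. real (Nbin0 J b a (b q)) / real (Nbin J b (b q))) / real (Nzero J a)"
    unfolding pro_weight_def by (simp add: sum_divide_distrib mult.commute divide_divide_eq_left)
  ultimately show ?thesis using N by simp
qed

text \<open>All these indices have a score at least that of the lowest of them, below which weight c
  already sits.\<close>
lemma sum_weight_of_high_ranks_le:
  fixes w S :: "nat \<Rightarrow> real"
  assumes J: "finite J" and w: "\<And>q. q \<in> J \<Longrightarrow> 0 \<le> w q" and w1: "(\<Sum>q\<in>J. w q) = 1" and c: "c \<le> 1"
  shows "(\<Sum>q\<in>J. if c \<le> (\<Sum>q'\<in>J. if S q' < S q then w q' else 0) then w q else 0) \<le> 1 - c"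
proof -
  define W where "W q = (\<Sum>q'\<in>J. if S q' < S q then w q' else 0)" for q
  define H where "H = {q\<in>J. c \<le> W q}"
  have "finite H" using J unfolding H_def by auto
  have lhs: "(\<Sum>q\<in>J. if c \<le> W q then w q else 0) = (\<Sum>q\<in>H. w q)"
    unfolding H_def using J by (simp add: sum.inter_filter)
  show ?thesis unfolding W_def[symmetric] lhs
  proof (cases "H = {}")
    case False
    then have "Min (S ` H) \<in> S ` H" using \<open>finite H\<close> by (intro Min_in) auto
    then obtain q0 where "q0 \<in> H" "S q0 = Min (S ` H)" by auto
    then have q0: "q0 \<in> H" "\<And>q. q \<in> H \<Longrightarrow> S q0 \<le> S q" using \<open>finite H\<close> by auto
    have "(\<Sum>q\<in>H. w q) = (\<Sum>q\<in>H. if S q0 \<le> S q then w q else 0)"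
      using q0 by (intro sum.cong) auto
    also have "\<dots> \<le> (\<Sum>q\<in>J. if S q0 \<le> S q then w q else 0)"
      by (rule sum_mono2[OF J]) (auto simp: H_def w)
    also have "\<dots> = 1 - W q0"
    proof -
      have "(\<Sum>q\<in>J. if S q0 \<le> S q then w q else 0) + W q0 = (\<Sum>q\<in>J. w q)"
        unfolding W_def sum.distrib[symmetric] by (intro sum.cong) auto
      then show ?thesis using w1 by simp
    qed
    also have "\<dots> \<le> 1 - c" using q0 unfolding H_def by auto
    finally show "(\<Sum>q\<in>H. w q) \<le> 1 - c" .
  qed (use c in simp)
qed

text \<open>Averaging a per-block bound over a random partition: be i U is the probability that the block
  of i is U, which is the same for all members of U.\<close>
lemma sum_over_blocks_ge:
  fixes be c :: "nat \<Rightarrow> nat set \<Rightarrow> real" and \<kappa> :: real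
  assumes I: "finite I" and \<U>: "finite \<U>"
    and be_nonneg: "\<And>i U. 0 \<le> be i U"
    and be_sum: "\<And>i. i \<in> I \<Longrightarrow> (\<Sum>U\<in>\<U>. be i U) = 1"
    and be_out: "\<And>i U. i \<in> I \<Longrightarrow> i \<notin> U \<Longrightarrow> be i U = 0"
    and be_same: "\<And>i i' U. i \<in> U \<Longrightarrow> i' \<in> U \<Longrightarrow> be i U = be i' U"
    and block_bound: "\<And>U. U \<in> \<U> \<Longrightarrow> \<kappa> * real (card (U \<inter> I)) \<le> (\<Sum>i\<in>U \<inter> I. c i U)"
  shows "\<kappa> * real (card I) \<le> (\<Sum>i\<in>I. \<Sum>U\<in>\<U>. be i U * c i U)"
proof -
  have per_block: "\<kappa> * (\<Sum>i\<in>I. be i U) \<le> (\<Sum>i\<in>I. be i U * c i U)" if U: "U \<in> \<U>" for U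
  proof (cases "U \<inter> I = {}")
    case True
    then have "be i U = 0" if "i \<in> I" for i using that be_out by blast
    then show ?thesis by simp
  next
    case False
    then obtain i0 where i0: "i0 \<in> U" "i0 \<in> I" by auto
    have be_eq: "be i U = (if i \<in> U then be i0 U else 0)" if "i \<in> I" for i
      using that be_out[of i U] be_same[OF _ i0(1), of i] by simp
    have "\<kappa> * (\<Sum>i\<in>I. be i U) = \<kappa> * (\<Sum>i\<in>I. if i \<in> U then be i0 U else 0)"
      by (simp add: be_eq)
    also have "\<dots> = be i0 U * (\<kappa> * real (card (U \<inter> I)))"
      using I by (simp add: sum.inter_restrict[symmetric] Int_commute)
    also have "\<dots> \<le> be i0 U * (\<Sum>i\<in>U \<inter> I. c i U)"
      by (intro mult_left_mono block_bound U be_nonneg)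
    also have "\<dots> = (\<Sum>i\<in>I. if i \<in> U then be i0 U * c i U else 0)"
      using I by (simp add: sum.inter_restrict[symmetric] sum_distrib_left Int_commute)
    also have "\<dots> = (\<Sum>i\<in>I. be i U * c i U)"
      by (intro sum.cong refl) (simp add: be_eq)
    finally show ?thesis .
  qed
  have "\<kappa> * real (card I) = \<kappa> * (\<Sum>i\<in>I. \<Sum>U\<in>\<U>. be i U)"
    by (simp add: be_sum)
  also have "\<dots> = (\<Sum>U\<in>\<U>. \<kappa> * (\<Sum>i\<in>I. be i U))"
    by (subst sum.swap) (simp add: sum_distrib_left)
  also have "\<dots> \<le> (\<Sum>U\<in>\<U>. \<Sum>i\<in>I. be i U * c i U)"
    by (intro sum_mono per_block)
  also have "\<dots> = (\<Sum>i\<in>I. \<Sum>U\<in>\<U>. be i U * c i U)"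
    by (rule sum.swap)
  finally show ?thesis .
qed

lemma pred_eq_count_space[measurable (raw)]:
  fixes f h :: "'a \<Rightarrow> 'b :: countable"
  assumes "f \<in> measurable M (count_space UNIV)" and "h \<in> measurable M (count_space UNIV)"
  shows "Measurable.pred M (\<lambda>x. f x = h x)"
proof -
  have "(\<lambda>x. (f x, h x)) \<in> measurable M (count_space UNIV \<Otimes>\<^sub>M count_space UNIV)"
    using assms by measurable
  then have "(\<lambda>x. (f x, h x)) \<in> measurable M (count_space UNIV)"
    by (simp add: pair_measure_countable)
  from measurable_compose[OF this, of "\<lambda>(y, z). y = z"] show ?thesis by simp
qed

lemma PiM_component_undefined:
  assumes "q \<notin> I" "d \<in> space (PiM I N)"
  shows "d q = undefined"
  using assms by (auto simp: space_PiM PiE_def extensional_def)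

lemma measurable_component_comp:
  assumes sN: "sets N = sets L" and f: "f \<in> measurable L K" and K: "space K = UNIV"
  shows "(\<lambda>d. f (d q)) \<in> measurable (PiM I (\<lambda>_. N)) K"
proof (cases "q \<in> I")
  case True
  have "(\<lambda>d. d q) \<in> measurable (PiM I (\<lambda>_. N)) N" using True by measurable
  then have "(\<lambda>d. d q) \<in> measurable (PiM I (\<lambda>_. N)) L"
    using measurable_cong_sets[OF refl sN, of "PiM I (\<lambda>_. N)"] by simp
  from measurable_compose[OF this f] show ?thesis .
next
  case False
  have "(\<lambda>d. f (d q)) \<in> measurable (PiM I (\<lambda>_. N)) K \<longleftrightarrow> (\<lambda>d. f undefined) \<in> measurable (PiM I (\<lambda>_. N)) K"
    by (rule measurable_cong) (simp add: PiM_component_undefined[OF False])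
  then show ?thesis using K by simp
qed

lemma (in product_sigma_finite) product_nn_integral_insert2:
  assumes R: "finite R" "i \<noteq> j" "i \<notin> R" "j \<notin> R"
    and f: "f \<in> borel_measurable (PiM (insert i (insert j R)) M)"
  shows "(\<integral>\<^sup>+ d. f d \<partial>PiM (insert i (insert j R)) M)
    = (\<integral>\<^sup>+ x. \<integral>\<^sup>+ y'. \<integral>\<^sup>+ y. f (x(j := y', i := y)) \<partial>M i \<partial>M j \<partial>PiM R M)"
proof -
  have "(\<integral>\<^sup>+ d. f d \<partial>PiM (insert i (insert j R)) M)
     = (\<integral>\<^sup>+ x. \<integral>\<^sup>+ y. f (x(i := y)) \<partial>M i \<partial>PiM (insert j R) M)"
    by (rule product_nn_integral_insert) (use R f in auto)
  also have "\<dots> = (\<integral>\<^sup>+ x. \<integral>\<^sup>+ y'. \<integral>\<^sup>+ y. f (x(j := y', i := y)) \<partial>M i \<partial>M j \<partial>PiM R M)"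
    by (rule product_nn_integral_insert) (use R f in auto, measurable)
  finally show ?thesis .
qed

section \<open>Exchanging two observations of the same bin\<close>

definition response_weight :: "('x \<Rightarrow> real) \<Rightarrow> bool \<Rightarrow> 'x \<Rightarrow> real" where
  "response_weight p c x = (if c then p x else 1 - p x)"

locale mar_sample =
  fixes M :: "'w measure" and MX :: "'x measure" and MY :: "'y measure"
    and X :: "nat \<Rightarrow> 'w \<Rightarrow> 'x" and Y :: "nat \<Rightarrow> 'w \<Rightarrow> 'y" and A :: "nat \<Rightarrow> 'w \<Rightarrow> bool"
    and p :: "'x \<Rightarrow> real" and s :: "'x \<Rightarrow> 'y \<Rightarrow> real"
    and n :: nat and alpha eps :: real
  assumes P: "prob_space M"
    and alpha: "0 < alpha" "alpha < 1" and eps: "0 < eps"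
    and p_meas: "p \<in> borel_measurable MX"
    and p_range: "\<And>x. 0 < p x \<and> p x < 1"
    and s_meas: "(\<lambda>(x, y). s x y) \<in> borel_measurable (MX \<Otimes>\<^sub>M MY)"
    and X_rv: "\<And>i. i < n \<Longrightarrow> X i \<in> measurable M MX"
    and Y_rv: "\<And>i. i < n \<Longrightarrow> Y i \<in> measurable M MY"
    and A_rv: "\<And>i. i < n \<Longrightarrow> A i \<in> measurable M (count_space (UNIV :: bool set))"
    and iid_indep: "prob_space.indep_vars M (\<lambda>_. MX \<Otimes>\<^sub>M MY \<Otimes>\<^sub>M count_space (UNIV :: bool set))
                      (\<lambda>i \<omega>. (X i \<omega>, Y i \<omega>, A i \<omega>)) {..<n}"
    and iid_ident: "\<And>i j. i < n \<Longrightarrow> j < n \<Longrightarrow>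
        distr M (MX \<Otimes>\<^sub>M MY \<Otimes>\<^sub>M count_space (UNIV :: bool set)) (\<lambda>\<omega>. (X i \<omega>, Y i \<omega>, A i \<omega>))
      = distr M (MX \<Otimes>\<^sub>M MY \<Otimes>\<^sub>M count_space (UNIV :: bool set)) (\<lambda>\<omega>. (X j \<omega>, Y j \<omega>, A j \<omega>))"
    and mar: "\<And>i S. i < n \<Longrightarrow> S \<in> sets (MX \<Otimes>\<^sub>M MY) \<Longrightarrow>
        measure M {\<omega> \<in> space M. A i \<omega> \<and> (X i \<omega>, Y i \<omega>) \<in> S}
      = (\<integral>\<omega>. indicator S (X i \<omega>, Y i \<omega>) * p (X i \<omega>) \<partial>M)"
begin

interpretation prob_space M by (rule P)

lemmas [measurable] = p_meas s_meas

abbreviation "MXYA \<equiv> MX \<Otimes>\<^sub>M MY \<Otimes>\<^sub>M count_space (UNIV :: bool set)"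

text \<open>The common law of the observations is represented by index 0; it is only meaningful when 0 < n.\<close>
definition obs :: "nat \<Rightarrow> 'w \<Rightarrow> 'x \<times> 'y \<times> bool" where "obs q \<omega> = (X q \<omega>, Y q \<omega>, A q \<omega>)"
definition obs_law :: "('x \<times> 'y \<times> bool) measure" where "obs_law = distr M MXYA (obs 0)"
definition xy_law :: "('x \<times> 'y) measure" where "xy_law = distr M (MX \<Otimes>\<^sub>M MY) (\<lambda>\<omega>. (X 0 \<omega>, Y 0 \<omega>))"

lemma measurable_obs: "q < n \<Longrightarrow> obs q \<in> measurable M MXYA"
  unfolding obs_def using X_rv Y_rv A_rv by measurable

lemma measurable_XY0: "0 < n \<Longrightarrow> (\<lambda>\<omega>. (X 0 \<omega>, Y 0 \<omega>)) \<in> measurable M (MX \<Otimes>\<^sub>M MY)"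
  using X_rv Y_rv by measurable

lemma sets_xy_law[measurable_cong]: "sets xy_law = sets (MX \<Otimes>\<^sub>M MY)"
  unfolding xy_law_def by simp

lemma sets_obs_law[measurable_cong]: "sets obs_law = sets MXYA"
  unfolding obs_law_def by simp

lemma prob_space_xy_law: "0 < n \<Longrightarrow> prob_space xy_law"
  unfolding xy_law_def by (rule prob_space_distr[OF measurable_XY0])

lemma prob_space_obs_law: "0 < n \<Longrightarrow> prob_space obs_law"
  unfolding obs_law_def by (rule prob_space_distr[OF measurable_obs])

lemma measurable_bin_of_p[measurable]: "(\<lambda>x. bin_of eps (p x)) \<in> measurable MX (count_space UNIV)"
  by (rule measurable_bin_of[OF eps p_meas p_range])

lemma measurable_response_weight[measurable]: "response_weight p c \<in> borel_measurable MX"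
  unfolding response_weight_def by (cases c) auto

lemma response_weight_range: "0 \<le> response_weight p c x" "response_weight p c x \<le> 1"
  unfolding response_weight_def using p_range[of x] by auto

lemma measure_response_event:
  assumes n: "0 < n" and S: "S \<in> sets (MX \<Otimes>\<^sub>M MY)"
  shows "measure M {\<omega> \<in> space M. A 0 \<omega> = c \<and> (X 0 \<omega>, Y 0 \<omega>) \<in> S}
      = (\<integral>\<omega>. response_weight p c (X 0 \<omega>) * indicator S (X 0 \<omega>, Y 0 \<omega>) \<partial>M)"
proof (cases c)
  case True
  then show ?thesis using mar[OF n S] by (simp add: response_weight_def mult.commute)
next
  case False
  note XY[measurable] = measurable_XY0[OF n] and X0[measurable] = X_rv[OF n]
    and A0[measurable] = A_rv[OF n] and S[measurable]
  have int_S: "integrable M (\<lambda>\<omega>. indicator S (X 0 \<omega>, Y 0 \<omega>) :: real)"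
    by (rule integrable_const_bound[where B=1]) (auto simp: indicator_def)
  have int_Sp: "integrable M (\<lambda>\<omega>. indicator S (X 0 \<omega>, Y 0 \<omega>) * p (X 0 \<omega>))"
    by (rule integrable_const_bound[where B=1]) (use p_range in \<open>auto simp: indicator_def less_imp_le\<close>)
  have "measure M {\<omega> \<in> space M. (X 0 \<omega>, Y 0 \<omega>) \<in> S} = (\<integral>\<omega>. indicator S (X 0 \<omega>, Y 0 \<omega>) \<partial>M)"
  proof -
    have "(\<integral>\<omega>. indicator S (X 0 \<omega>, Y 0 \<omega>) \<partial>M)
        = (\<integral>\<omega>. indicator {\<omega> \<in> space M. (X 0 \<omega>, Y 0 \<omega>) \<in> S} \<omega> \<partial>M)"
      by (intro Bochner_Integration.integral_cong) (auto simp: indicator_def)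
    also have "\<dots> = measure M {\<omega> \<in> space M. (X 0 \<omega>, Y 0 \<omega>) \<in> S}"
      by (simp add: Int_absorb2)
    finally show ?thesis by simp
  qed
  moreover have "{\<omega> \<in> space M. A 0 \<omega> = c \<and> (X 0 \<omega>, Y 0 \<omega>) \<in> S}
    = {\<omega> \<in> space M. (X 0 \<omega>, Y 0 \<omega>) \<in> S} - {\<omega> \<in> space M. A 0 \<omega> \<and> (X 0 \<omega>, Y 0 \<omega>) \<in> S}"
    using False by auto
  then have "measure M {\<omega> \<in> space M. A 0 \<omega> = c \<and> (X 0 \<omega>, Y 0 \<omega>) \<in> S}
    = measure M {\<omega> \<in> space M. (X 0 \<omega>, Y 0 \<omega>) \<in> S} - measure M {\<omega> \<in> space M. A 0 \<omega> \<and> (X 0 \<omega>, Y 0 \<omega>) \<in> S}"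
    by (simp, subst finite_measure_Diff; auto)
  ultimately have "measure M {\<omega> \<in> space M. A 0 \<omega> = c \<and> (X 0 \<omega>, Y 0 \<omega>) \<in> S}
    = (\<integral>\<omega>. indicator S (X 0 \<omega>, Y 0 \<omega>) \<partial>M) - (\<integral>\<omega>. indicator S (X 0 \<omega>, Y 0 \<omega>) * p (X 0 \<omega>) \<partial>M)"
    using mar[OF n S] by simp
  also have "\<dots> = (\<integral>\<omega>. response_weight p c (X 0 \<omega>) * indicator S (X 0 \<omega>, Y 0 \<omega>) \<partial>M)"
    using False by (subst Bochner_Integration.integral_diff[OF int_S int_Sp, symmetric])
      (auto simp: response_weight_def algebra_simps intro!: Bochner_Integration.integral_cong)
  finally show ?thesis .
qed

lemma emeasure_response_event:
  assumes n: "0 < n" and S: "S \<in> sets (MX \<Otimes>\<^sub>M MY)"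
  shows "emeasure M {\<omega> \<in> space M. A 0 \<omega> = c \<and> (X 0 \<omega>, Y 0 \<omega>) \<in> S}
     = (\<integral>\<^sup>+ \<omega>. ennreal (response_weight p c (X 0 \<omega>)) * indicator S (X 0 \<omega>, Y 0 \<omega>) \<partial>M)"
proof -
  note XY[measurable] = measurable_XY0[OF n] and X0[measurable] = X_rv[OF n]
    and A0[measurable] = A_rv[OF n] and S[measurable]
  have int: "integrable M (\<lambda>\<omega>. response_weight p c (X 0 \<omega>) * indicator S (X 0 \<omega>, Y 0 \<omega>))"
    by (rule integrable_const_bound[where B=1]) (use response_weight_range in \<open>auto simp: indicator_def\<close>)
  have "(\<integral>\<^sup>+ \<omega>. ennreal (response_weight p c (X 0 \<omega>)) * indicator S (X 0 \<omega>, Y 0 \<omega>) \<partial>M)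
      = ennreal (\<integral>\<omega>. response_weight p c (X 0 \<omega>) * indicator S (X 0 \<omega>, Y 0 \<omega>) \<partial>M)"
    by (subst nn_integral_eq_integral[OF int, symmetric])
       (auto simp: response_weight_range indicator_def intro!: nn_integral_cong)
  then show ?thesis using measure_response_event[OF n S] by (simp add: emeasure_eq_measure)
qed

text \<open>Missingness at random, as an identity of measures: restricting to A = c and weighting by the
  response probability induce the same law of (X, Y).\<close>
lemma distr_density_response_eq:
  assumes n: "0 < n"
  shows "distr (density M (\<lambda>\<omega>. indicator {\<omega>. A 0 \<omega> = c} \<omega>)) (MX \<Otimes>\<^sub>M MY) (\<lambda>\<omega>. (X 0 \<omega>, Y 0 \<omega>))
       = distr (density M (\<lambda>\<omega>. ennreal (response_weight p c (X 0 \<omega>)))) (MX \<Otimes>\<^sub>M MY) (\<lambda>\<omega>. (X 0 \<omega>, Y 0 \<omega>))"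
    (is "distr (density M ?f) _ ?XY = distr (density M ?g) _ ?XY")
proof (rule measure_eqI)
  note XY[measurable] = measurable_XY0[OF n] and X0[measurable] = X_rv[OF n]
    and A0[measurable] = A_rv[OF n]
  have "?f = (\<lambda>\<omega>. if A 0 \<omega> = c then 1 else 0)" by (auto simp: fun_eq_iff)
  then have [measurable]: "?f \<in> borel_measurable M" by simp
  have XY_f: "?XY \<in> measurable (density M ?f) (MX \<Otimes>\<^sub>M MY)"
    and XY_g: "?XY \<in> measurable (density M ?g) (MX \<Otimes>\<^sub>M MY)"
    by (simp_all add: measurable_cong_sets[OF sets_density refl])
  show "sets (distr (density M ?f) (MX \<Otimes>\<^sub>M MY) ?XY) = sets (distr (density M ?g) (MX \<Otimes>\<^sub>M MY) ?XY)"
    by simp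
  fix S assume "S \<in> sets (distr (density M ?f) (MX \<Otimes>\<^sub>M MY) ?XY)"
  then have S[measurable]: "S \<in> sets (MX \<Otimes>\<^sub>M MY)" by simp
  have "emeasure (distr (density M ?f) (MX \<Otimes>\<^sub>M MY) ?XY) S
      = (\<integral>\<^sup>+ \<omega>. ?f \<omega> * indicator (?XY -` S \<inter> space M) \<omega> \<partial>M)"
    by (simp add: emeasure_distr[OF XY_f] emeasure_density)
  also have "\<dots> = (\<integral>\<^sup>+ \<omega>. indicator {\<omega> \<in> space M. A 0 \<omega> = c \<and> (X 0 \<omega>, Y 0 \<omega>) \<in> S} \<omega> \<partial>M)"
    by (intro nn_integral_cong) (auto simp: indicator_def)
  also have "\<dots> = emeasure M {\<omega> \<in> space M. A 0 \<omega> = c \<and> (X 0 \<omega>, Y 0 \<omega>) \<in> S}"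
    by (intro nn_integral_indicator) measurable
  also have "\<dots> = (\<integral>\<^sup>+ \<omega>. ?g \<omega> * indicator S (X 0 \<omega>, Y 0 \<omega>) \<partial>M)"
    by (rule emeasure_response_event[OF n S])
  also have "\<dots> = (\<integral>\<^sup>+ \<omega>. ?g \<omega> * indicator (?XY -` S \<inter> space M) \<omega> \<partial>M)"
    by (intro nn_integral_cong) (auto simp: indicator_def)
  also have "\<dots> = emeasure (distr (density M ?g) (MX \<Otimes>\<^sub>M MY) ?XY) S"
    by (simp add: emeasure_distr[OF XY_g] emeasure_density)
  finally show "emeasure (distr (density M ?f) (MX \<Otimes>\<^sub>M MY) ?XY) S
      = emeasure (distr (density M ?g) (MX \<Otimes>\<^sub>M MY) ?XY) S" .
qed

lemma nn_integral_obs_law_response: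
  assumes n: "0 < n" and g[measurable]: "g \<in> borel_measurable (MX \<Otimes>\<^sub>M MY)"
  shows "(\<integral>\<^sup>+ z. g (fst z, fst (snd z)) * indicator {z. snd (snd z) = c} z \<partial>obs_law)
       = (\<integral>\<^sup>+ v. g v * ennreal (response_weight p c (fst v)) \<partial>xy_law)"
proof -
  note XY[measurable] = measurable_XY0[OF n] and X0[measurable] = X_rv[OF n]
    and A0[measurable] = A_rv[OF n] and obs0[measurable] = measurable_obs[OF n]
  define f where "f \<omega> = (indicator {\<omega>. A 0 \<omega> = c} \<omega> :: ennreal)" for \<omega>
  define h where "h \<omega> = ennreal (response_weight p c (X 0 \<omega>))" for \<omega>
  have "f = (\<lambda>\<omega>. if A 0 \<omega> = c then 1 else 0)" unfolding f_def by (auto simp: fun_eq_iff)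
  then have [measurable]: "f \<in> borel_measurable M" by simp
  have [measurable]: "h \<in> borel_measurable M" unfolding h_def by measurable
  have XY_f: "(\<lambda>\<omega>. (X 0 \<omega>, Y 0 \<omega>)) \<in> measurable (density M f) (MX \<Otimes>\<^sub>M MY)"
    and XY_h: "(\<lambda>\<omega>. (X 0 \<omega>, Y 0 \<omega>)) \<in> measurable (density M h) (MX \<Otimes>\<^sub>M MY)"
    by (simp_all add: measurable_cong_sets[OF sets_density refl])
  have "(\<lambda>z. indicator {z. snd (snd z) = c} z :: ennreal) = (\<lambda>z. if snd (snd z) = c then 1 else 0)"
    by (auto simp: fun_eq_iff)
  then have "(\<integral>\<^sup>+ z. g (fst z, fst (snd z)) * indicator {z. snd (snd z) = c} z \<partial>obs_law)
      = (\<integral>\<^sup>+ \<omega>. f \<omega> * g (X 0 \<omega>, Y 0 \<omega>) \<partial>M)"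
    unfolding obs_law_def
    by (subst nn_integral_distr[OF obs0]) (simp, intro nn_integral_cong, auto simp: f_def obs_def indicator_def)
  also have "\<dots> = integral\<^sup>N (distr (density M f) (MX \<Otimes>\<^sub>M MY) (\<lambda>\<omega>. (X 0 \<omega>, Y 0 \<omega>))) g"
    by (simp add: nn_integral_distr[OF XY_f] nn_integral_density)
  also have "\<dots> = integral\<^sup>N (distr (density M h) (MX \<Otimes>\<^sub>M MY) (\<lambda>\<omega>. (X 0 \<omega>, Y 0 \<omega>))) g"
    unfolding f_def h_def distr_density_response_eq[OF n] ..
  also have "\<dots> = (\<integral>\<^sup>+ \<omega>. h \<omega> * g (X 0 \<omega>, Y 0 \<omega>) \<partial>M)"
    by (simp add: nn_integral_distr[OF XY_h] nn_integral_density)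
  also have "\<dots> = (\<integral>\<^sup>+ v. g v * ennreal (response_weight p c (fst v)) \<partial>xy_law)"
    unfolding xy_law_def by (subst nn_integral_distr[OF XY]) (auto simp: h_def mult.commute)
  finally show ?thesis .
qed

definition bin_indicator :: "int \<Rightarrow> 'x \<times> 'y \<Rightarrow> ennreal" where
  "bin_indicator k v = (if bin_of eps (p (fst v)) = k then 1 else 0)"

definition cell_indicator :: "int \<Rightarrow> bool \<Rightarrow> 'x \<times> 'y \<times> bool \<Rightarrow> ennreal" where
  "cell_indicator k c z = (if bin_of eps (p (fst z)) = k \<and> snd (snd z) = c then 1 else 0)"

text \<open>The density, with respect to xy_law twice, of an unobserved point v together with a point v'
  with A = c, both in bin k.\<close>
definition pair_weight :: "int \<Rightarrow> bool \<Rightarrow> 'x \<times> 'y \<Rightarrow> 'x \<times> 'y \<Rightarrow> ennreal" where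
  "pair_weight k c v v' = bin_indicator k v * bin_indicator k v'
     * ennreal (response_weight p False (fst v) * response_weight p c (fst v'))"

lemma measurable_bin_indicator[measurable]: "bin_indicator k \<in> borel_measurable (MX \<Otimes>\<^sub>M MY)"
  unfolding bin_indicator_def by measurable

lemma measurable_cell_indicator[measurable]: "cell_indicator k c \<in> borel_measurable MXYA"
  unfolding cell_indicator_def by measurable

lemma measurable_pair_weight[measurable]:
  "case_prod (pair_weight k c) \<in> borel_measurable ((MX \<Otimes>\<^sub>M MY) \<Otimes>\<^sub>M (MX \<Otimes>\<^sub>M MY))"
  unfolding pair_weight_def by measurable

lemma response_weight_swap_le:
  assumes "bin_of eps (p x) = k" "bin_of eps (p x') = k"
  shows "response_weight p False x * response_weight p c x'
    \<le> (1 + eps) * (response_weight p False x' * response_weight p c x)"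
proof (cases c)
  case True
  then show ?thesis using odds_le_if_same_bin[OF eps _ _ _ _ assms] p_range[of x] p_range[of x']
    by (simp add: response_weight_def)
next
  case False
  define t where "t = (1 - p x) * (1 - p x')"
  have "0 \<le> t" unfolding t_def using p_range[of x] p_range[of x'] by simp
  then have "t \<le> (1 + eps) * t" using eps by (simp add: algebra_simps)
  then show ?thesis using False by (simp add: response_weight_def t_def mult.commute)
qed

lemma pair_weight_swap_le: "pair_weight k c v v' \<le> ennreal (1 + eps) * pair_weight k c v' v"
proof (cases "bin_of eps (p (fst v)) = k \<and> bin_of eps (p (fst v')) = k")
  case True
  have "ennreal (response_weight p False (fst v) * response_weight p c (fst v'))
     \<le> ennreal ((1 + eps) * (response_weight p False (fst v') * response_weight p c (fst v)))"
    using True by (intro ennreal_leI response_weight_swap_le) auto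
  also have "\<dots> = ennreal (1 + eps) * ennreal (response_weight p False (fst v') * response_weight p c (fst v))"
    using eps response_weight_range by (intro ennreal_mult) auto
  finally show ?thesis using True by (simp add: pair_weight_def bin_indicator_def)
qed (auto simp: pair_weight_def bin_indicator_def)

lemma nn_integral_unobserved_cell:
  assumes n: "0 < n" and G[measurable]: "case_prod G \<in> borel_measurable ((MX \<Otimes>\<^sub>M MY) \<Otimes>\<^sub>M (MX \<Otimes>\<^sub>M MY))"
    and y': "y' \<in> space obs_law"
  shows "(\<integral>\<^sup>+ y. cell_indicator k False y * cell_indicator k c y' * G (fst y, fst (snd y)) (fst y', fst (snd y'))
       \<partial>obs_law)
     = (bin_indicator k (fst y', fst (snd y'))
         * (\<integral>\<^sup>+ v. bin_indicator k v * G v (fst y', fst (snd y')) * ennreal (response_weight p False (fst v)) \<partial>xy_law))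
       * indicator {z. snd (snd z) = c} y'"
proof -
  have [measurable]: "(fst y', fst (snd y')) \<in> space (MX \<Otimes>\<^sub>M MY)"
    using y' by (auto simp: space_pair_measure obs_law_def)
  have "(\<integral>\<^sup>+ y. cell_indicator k False y * cell_indicator k c y' * G (fst y, fst (snd y)) (fst y', fst (snd y'))
      \<partial>obs_law)
    = (\<integral>\<^sup>+ v. (cell_indicator k c y' * bin_indicator k v * G v (fst y', fst (snd y')))
        * ennreal (response_weight p False (fst v)) \<partial>xy_law)"
    by (subst nn_integral_obs_law_response[OF n, symmetric])
      (measurable, auto intro!: nn_integral_cong simp: cell_indicator_def bin_indicator_def indicator_def)
  also have "\<dots> = cell_indicator k c y'
      * (\<integral>\<^sup>+ v. bin_indicator k v * G v (fst y', fst (snd y')) * ennreal (response_weight p False (fst v)) \<partial>xy_law)"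
    by (subst nn_integral_cmult[symmetric]) (measurable, auto intro!: nn_integral_cong simp: ac_simps)
  finally show ?thesis by (auto simp: cell_indicator_def bin_indicator_def indicator_def)
qed

lemma nn_integral_pair_cell_eq:
  assumes n: "0 < n" and G[measurable]: "case_prod G \<in> borel_measurable ((MX \<Otimes>\<^sub>M MY) \<Otimes>\<^sub>M (MX \<Otimes>\<^sub>M MY))"
  shows "(\<integral>\<^sup>+ y'. \<integral>\<^sup>+ y. cell_indicator k False y * cell_indicator k c y' * G (fst y, fst (snd y)) (fst y', fst (snd y'))
            \<partial>obs_law \<partial>obs_law)
     = (\<integral>\<^sup>+ v'. \<integral>\<^sup>+ v. pair_weight k c v v' * G v v' \<partial>xy_law \<partial>xy_law)"
proof -
  interpret xy_law: prob_space xy_law by (rule prob_space_xy_law[OF n])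
  let ?F = "\<lambda>v'. \<integral>\<^sup>+ v. bin_indicator k v * G v v' * ennreal (response_weight p False (fst v)) \<partial>xy_law"
  have "(\<integral>\<^sup>+ y'. \<integral>\<^sup>+ y. cell_indicator k False y * cell_indicator k c y' * G (fst y, fst (snd y)) (fst y', fst (snd y'))
          \<partial>obs_law \<partial>obs_law)
      = (\<integral>\<^sup>+ y'. (bin_indicator k (fst y', fst (snd y')) * ?F (fst y', fst (snd y')))
            * indicator {z. snd (snd z) = c} y' \<partial>obs_law)"
    by (intro nn_integral_cong nn_integral_unobserved_cell[OF n G])
  also have "\<dots> = (\<integral>\<^sup>+ v'. (bin_indicator k v' * ?F v') * ennreal (response_weight p c (fst v')) \<partial>xy_law)"
    by (rule nn_integral_obs_law_response[OF n]) measurable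
  also have "\<dots> = (\<integral>\<^sup>+ v'. \<integral>\<^sup>+ v. pair_weight k c v v' * G v v' \<partial>xy_law \<partial>xy_law)"
  proof (intro nn_integral_cong)
    fix v' assume "v' \<in> space xy_law"
    then have [measurable]: "v' \<in> space (MX \<Otimes>\<^sub>M MY)" by (simp add: xy_law_def)
    have "(bin_indicator k v' * ?F v') * ennreal (response_weight p c (fst v'))
      = (\<integral>\<^sup>+ v. (bin_indicator k v' * ennreal (response_weight p c (fst v')))
           * (bin_indicator k v * G v v' * ennreal (response_weight p False (fst v))) \<partial>xy_law)"
      by (subst nn_integral_cmult) (measurable, simp add: ac_simps)
    also have "\<dots> = (\<integral>\<^sup>+ v. pair_weight k c v v' * G v v' \<partial>xy_law)"
      by (intro nn_integral_cong) (simp add: pair_weight_def ennreal_mult response_weight_range ac_simps)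
    finally show "(bin_indicator k v' * ?F v') * ennreal (response_weight p c (fst v'))
        = (\<integral>\<^sup>+ v. pair_weight k c v v' * G v v' \<partial>xy_law)" .
  qed
  finally show ?thesis .
qed

lemma nn_integral_pair_cell_swap_le:
  assumes n: "0 < n" and h[measurable]: "case_prod h \<in> borel_measurable ((MX \<Otimes>\<^sub>M MY) \<Otimes>\<^sub>M (MX \<Otimes>\<^sub>M MY))"
  shows "(\<integral>\<^sup>+ y'. \<integral>\<^sup>+ y. cell_indicator k False y * cell_indicator k c y' * h (fst y, fst (snd y)) (fst y', fst (snd y'))
            \<partial>obs_law \<partial>obs_law)
     \<le> ennreal (1 + eps) * (\<integral>\<^sup>+ y'. \<integral>\<^sup>+ y. cell_indicator k False y * cell_indicator k c y'
            * h (fst y', fst (snd y')) (fst y, fst (snd y)) \<partial>obs_law \<partial>obs_law)"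
proof -
  interpret xy_law: prob_space xy_law by (rule prob_space_xy_law[OF n])
  interpret xy2: pair_sigma_finite xy_law xy_law ..
  have [measurable]: "case_prod (\<lambda>v v'. h v' v) \<in> borel_measurable ((MX \<Otimes>\<^sub>M MY) \<Otimes>\<^sub>M (MX \<Otimes>\<^sub>M MY))"
    by measurable
  have "(\<integral>\<^sup>+ v'. \<integral>\<^sup>+ v. pair_weight k c v v' * h v v' \<partial>xy_law \<partial>xy_law)
      \<le> (\<integral>\<^sup>+ v'. \<integral>\<^sup>+ v. ennreal (1 + eps) * (pair_weight k c v' v * h v v') \<partial>xy_law \<partial>xy_law)"
    by (intro nn_integral_mono) (simp add: mult.assoc[symmetric] mult_right_mono pair_weight_swap_le)
  also have "\<dots> = (\<integral>\<^sup>+ v'. ennreal (1 + eps) * \<integral>\<^sup>+ v. pair_weight k c v' v * h v v' \<partial>xy_law \<partial>xy_law)"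
  proof (intro nn_integral_cong nn_integral_cmult)
    fix v' assume "v' \<in> space xy_law"
    then have [measurable]: "v' \<in> space (MX \<Otimes>\<^sub>M MY)" by (simp add: xy_law_def)
    show "(\<lambda>v. pair_weight k c v' v * h v v') \<in> borel_measurable xy_law" by measurable
  qed
  also have "\<dots> = ennreal (1 + eps) * (\<integral>\<^sup>+ v'. \<integral>\<^sup>+ v. pair_weight k c v' v * h v v' \<partial>xy_law \<partial>xy_law)"
    by (intro nn_integral_cmult) measurable
  also have "(\<integral>\<^sup>+ v'. \<integral>\<^sup>+ v. pair_weight k c v' v * h v v' \<partial>xy_law \<partial>xy_law)
      = (\<integral>\<^sup>+ v'. \<integral>\<^sup>+ v. pair_weight k c v v' * h v' v \<partial>xy_law \<partial>xy_law)"
    by (rule xy2.Fubini') measurable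
  finally have "(\<integral>\<^sup>+ v'. \<integral>\<^sup>+ v. pair_weight k c v v' * h v v' \<partial>xy_law \<partial>xy_law)
      \<le> ennreal (1 + eps) * (\<integral>\<^sup>+ v'. \<integral>\<^sup>+ v. pair_weight k c v v' * h v' v \<partial>xy_law \<partial>xy_law)" .
  moreover have "(\<integral>\<^sup>+ y'. \<integral>\<^sup>+ y. cell_indicator k False y * cell_indicator k c y'
        * h (fst y', fst (snd y')) (fst y, fst (snd y)) \<partial>obs_law \<partial>obs_law)
      = (\<integral>\<^sup>+ v'. \<integral>\<^sup>+ v. pair_weight k c v v' * h v' v \<partial>xy_law \<partial>xy_law)"
    using nn_integral_pair_cell_eq[OF n, of "\<lambda>v v'. h v' v"] by simp
  ultimately show ?thesis unfolding nn_integral_pair_cell_eq[OF n h] by simp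
qed

section \<open>Coverage on a fixed pattern of bins and missingness\<close>

definition sample_law :: "(nat \<Rightarrow> 'x \<times> 'y \<times> bool) measure" where
  "sample_law = PiM {..<n} (\<lambda>_. obs_law)"

definition sample_score :: "(nat \<Rightarrow> 'x \<times> 'y \<times> bool) \<Rightarrow> nat \<Rightarrow> real" where
  "sample_score d q = s (fst (d q)) (fst (snd (d q)))"

definition pattern_at :: "(nat \<Rightarrow> int) \<Rightarrow> (nat \<Rightarrow> bool) \<Rightarrow> nat \<Rightarrow> 'x \<times> 'y \<times> bool \<Rightarrow> bool" where
  "pattern_at b a q z = (bin_of eps (p (fst z)) = b q \<and> snd (snd z) = a q)"

definition has_pattern :: "(nat \<Rightarrow> int) \<Rightarrow> (nat \<Rightarrow> bool) \<Rightarrow> (nat \<Rightarrow> 'x \<times> 'y \<times> bool) \<Rightarrow> bool" where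
  "has_pattern b a d = (\<forall>q\<in>{..<n}. pattern_at b a q (d q))"

text \<open>covered J b a d i says that Y_i lies in C^pro computed from the indices J
  (see mem_C_pro_iff_covered). In the oracle version the unobserved scores, with the same weights,
  take the place of the atom at infinity; the oracle set is smaller, so oracle coverage implies coverage.\<close>
definition covered :: "nat set \<Rightarrow> (nat \<Rightarrow> int) \<Rightarrow> (nat \<Rightarrow> bool) \<Rightarrow> (nat \<Rightarrow> 'x \<times> 'y \<times> bool) \<Rightarrow> nat \<Rightarrow> bool"
  where "covered J b a d i
    \<longleftrightarrow> (\<Sum>q\<in>{q\<in>J. a q}. if sample_score d q < sample_score d i then pro_weight J b a q else 0) < 1 - alpha"

definition oracle_uncovered :: "nat set \<Rightarrow> (nat \<Rightarrow> int) \<Rightarrow> (nat \<Rightarrow> bool) \<Rightarrow> (nat \<Rightarrow> 'x \<times> 'y \<times> bool) \<Rightarrow> nat \<Rightarrow> bool"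
  where "oracle_uncovered J b a d i
    \<longleftrightarrow> 1 - alpha \<le> (\<Sum>q\<in>J. if sample_score d q < sample_score d i then pro_weight J b a q else 0)"

lemma measurable_sample_score[measurable]:
  "sets N = sets MXYA \<Longrightarrow> (\<lambda>d. sample_score d q) \<in> borel_measurable (PiM I (\<lambda>_. N))"
  unfolding sample_score_def by (erule measurable_component_comp) auto

lemma measurable_pattern_at[measurable]:
  "sets N = sets MXYA \<Longrightarrow> (\<lambda>d. pattern_at b a q (d r)) \<in> measurable (PiM I (\<lambda>_. N)) (count_space UNIV)"
  unfolding pattern_at_def by (erule measurable_component_comp) auto

lemma measurable_has_pattern[measurable]:
  "sets N = sets MXYA \<Longrightarrow> Measurable.pred (PiM I (\<lambda>_. N)) (has_pattern b a)"
  unfolding has_pattern_def by measurable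

lemma measurable_oracle_uncovered[measurable]:
  "sets N = sets MXYA \<Longrightarrow> Measurable.pred (PiM I (\<lambda>_. N)) (\<lambda>d. oracle_uncovered J b a d i)"
  unfolding oracle_uncovered_def by measurable

lemma measurable_covered[measurable]:
  "sets N = sets MXYA \<Longrightarrow> Measurable.pred (PiM I (\<lambda>_. N)) (\<lambda>d. covered J b a d i)"
  unfolding covered_def by measurable

lemma prob_space_sample_law: "0 < n \<Longrightarrow> prob_space sample_law"
  unfolding sample_law_def by (intro prob_space_PiM prob_space_obs_law)

definition pattern_event :: "(nat \<Rightarrow> int) \<Rightarrow> (nat \<Rightarrow> bool) \<Rightarrow> (nat \<Rightarrow> 'x \<times> 'y \<times> bool) set" where
  "pattern_event b a = {d \<in> space sample_law. has_pattern b a d}"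

definition uncovered_event :: "nat set \<Rightarrow> (nat \<Rightarrow> int) \<Rightarrow> (nat \<Rightarrow> bool) \<Rightarrow> nat \<Rightarrow> (nat \<Rightarrow> 'x \<times> 'y \<times> bool) set"
  where "uncovered_event J b a i = {d \<in> space sample_law. has_pattern b a d \<and> oracle_uncovered J b a d i}"

definition covered_event :: "nat set \<Rightarrow> (nat \<Rightarrow> int) \<Rightarrow> (nat \<Rightarrow> bool) \<Rightarrow> nat \<Rightarrow> (nat \<Rightarrow> 'x \<times> 'y \<times> bool) set"
  where "covered_event J b a i = {d \<in> space sample_law. has_pattern b a d \<and> covered J b a d i}"

lemma sets_pattern_event[measurable]: "pattern_event b a \<in> sets sample_law"
  unfolding pattern_event_def sample_law_def by measurable (simp add: sets_obs_law)

lemma sets_uncovered_event[measurable]: "uncovered_event J b a i \<in> sets sample_law"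
  unfolding uncovered_event_def sample_law_def by measurable (simp add: sets_obs_law)

lemma sets_covered_event[measurable]: "covered_event J b a i \<in> sets sample_law"
  unfolding covered_event_def sample_law_def by measurable (simp add: sets_obs_law)

definition scores_upd :: "nat \<Rightarrow> nat \<Rightarrow> (nat \<Rightarrow> 'x \<times> 'y \<times> bool) \<Rightarrow> 'x \<times> 'y \<Rightarrow> 'x \<times> 'y \<Rightarrow> nat \<Rightarrow> real" where
  "scores_upd i j x' v v' q = (if q = i then s (fst v) (snd v) else if q = j then s (fst v') (snd v') else sample_score x' q)"

definition uncovered_after_upd ::
    "nat set \<Rightarrow> (nat \<Rightarrow> int) \<Rightarrow> (nat \<Rightarrow> bool) \<Rightarrow> nat \<Rightarrow> nat \<Rightarrow> (nat \<Rightarrow> 'x \<times> 'y \<times> bool) \<Rightarrow> 'x \<times> 'y \<Rightarrow> 'x \<times> 'y \<Rightarrow> ennreal"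
  where "uncovered_after_upd J b a i j x' v v' =
    (if 1 - alpha \<le> (\<Sum>q\<in>J. if scores_upd i j x' v v' q < scores_upd i j x' v v' i then pro_weight J b a q else 0)
     then 1 else 0)"

lemma measurable_scores_upd[measurable]:
  "(\<lambda>(v, v'). scores_upd i j x' v v' q) \<in> borel_measurable ((MX \<Otimes>\<^sub>M MY) \<Otimes>\<^sub>M (MX \<Otimes>\<^sub>M MY))"
proof -
  have s2: "(\<lambda>v. s (fst v) (snd v)) \<in> borel_measurable (MX \<Otimes>\<^sub>M MY)"
    using s_meas by (simp add: case_prod_beta')
  show ?thesis unfolding scores_upd_def using s2 by measurable
qed

lemma measurable_uncovered_after_upd[measurable]:
  "case_prod (uncovered_after_upd J b a i j x') \<in> borel_measurable ((MX \<Otimes>\<^sub>M MY) \<Otimes>\<^sub>M (MX \<Otimes>\<^sub>M MY))"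
proof -
  have "case_prod (uncovered_after_upd J b a i j x') = (\<lambda>w. if 1 - alpha \<le> (\<Sum>q\<in>J. if (\<lambda>(v, v'). scores_upd i j x' v v' q) w < (\<lambda>(v, v'). scores_upd i j x' v v' i) w then pro_weight J b a q else 0) then 1 else (0::ennreal))"
    by (auto simp: uncovered_after_upd_def fun_eq_iff)
  also have "\<dots> \<in> borel_measurable ((MX \<Otimes>\<^sub>M MY) \<Otimes>\<^sub>M (MX \<Otimes>\<^sub>M MY))"
    by measurable
  finally show ?thesis .
qed

lemma sample_score_upd:
  assumes "i \<noteq> j"
  shows "sample_score (x'(j := y', i := y)) q = scores_upd i j x' (fst y, fst (snd y)) (fst y', fst (snd y')) q"
  using assms unfolding scores_upd_def sample_score_def by auto

lemma oracle_uncovered_upd_i: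
  assumes "i \<noteq> j"
  shows "(if oracle_uncovered J b a (x'(j := y', i := y)) i then 1 else (0::ennreal))
     = uncovered_after_upd J b a i j x' (fst y, fst (snd y)) (fst y', fst (snd y'))"
  unfolding oracle_uncovered_def uncovered_after_upd_def sample_score_upd[OF assms] ..

lemma oracle_uncovered_upd_j:
  assumes ij: "i \<noteq> j" and J: "i \<in> J" "j \<in> J" and bij: "b i = b j"
  shows "(if oracle_uncovered J b a (x'(j := y', i := y)) j then 1 else (0::ennreal))
     = uncovered_after_upd J b a i j x' (fst y', fst (snd y')) (fst y, fst (snd y))"
proof -
  define v where "v = (fst y, fst (snd y))"
  define v' where "v' = (fst y', fst (snd y'))"
  define sw where "sw q = (if q = i then j else if q = j then i else q)" for q
  have bij_sw: "bij_betw sw J J"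
    by (rule bij_betwI[where g=sw]) (use J in \<open>auto simp: sw_def\<close>)
  have Ssw: "scores_upd i j x' v v' (sw q) = scores_upd i j x' v' v q" for q
    using ij unfolding scores_upd_def sw_def by auto
  have wsw: "pro_weight J b a (sw q) = pro_weight J b a q" for q
    unfolding pro_weight_def sw_def using bij by auto
  have "(\<Sum>q\<in>J. if scores_upd i j x' v v' q < scores_upd i j x' v v' j then pro_weight J b a q else 0)
      = (\<Sum>q\<in>J. if scores_upd i j x' v v' (sw q) < scores_upd i j x' v v' j then pro_weight J b a (sw q) else 0)"
    by (rule sum.reindex_bij_betw[OF bij_sw, symmetric])
  also have "\<dots> = (\<Sum>q\<in>J. if scores_upd i j x' v' v q < scores_upd i j x' v' v i then pro_weight J b a q else 0)"
    using ij by (intro sum.cong refl) (simp add: Ssw wsw, simp add: scores_upd_def)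
  finally show ?thesis
    unfolding oracle_uncovered_def uncovered_after_upd_def sample_score_upd[OF ij] v_def[symmetric] v'_def[symmetric] by simp
qed

definition pattern_uncovered :: "nat set \<Rightarrow> (nat \<Rightarrow> int) \<Rightarrow> (nat \<Rightarrow> bool) \<Rightarrow> nat \<Rightarrow> (nat \<Rightarrow> 'x \<times> 'y \<times> bool) \<Rightarrow> ennreal"
  where "pattern_uncovered J b a i d = (if has_pattern b a d \<and> oracle_uncovered J b a d i then 1 else 0)"

lemma measurable_pattern_uncovered[measurable]:
  "sets N = sets MXYA \<Longrightarrow> pattern_uncovered J b a i \<in> borel_measurable (PiM I (\<lambda>_. N))"
  unfolding pattern_uncovered_def by measurable

lemma has_pattern_upd:
  assumes U: "{..<n} = insert i (insert j R)" and ij: "i \<noteq> j" "i \<notin> R" "j \<notin> R"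
  shows "has_pattern b a (x'(j := y', i := y))
    \<longleftrightarrow> (\<forall>q\<in>R. pattern_at b a q (x' q)) \<and> pattern_at b a i y \<and> pattern_at b a j y'"
  unfolding has_pattern_def U using ij by auto

text \<open>With all other coordinates frozen, an unobserved i and an index j of the same bin can swap
  their data.\<close>
lemma nn_integral_pattern_uncovered_swap_le:
  assumes U: "{..<n} = insert i (insert j R)" and ij: "i \<noteq> j" "i \<notin> R" "j \<notin> R"
    and J: "i \<in> J" "j \<in> J" and bij: "b i = b j" and ai: "\<not> a i"
  shows "(\<integral>\<^sup>+ y'. \<integral>\<^sup>+ y. pattern_uncovered J b a i (x'(j := y', i := y)) \<partial>obs_law \<partial>obs_law)
      \<le> ennreal (1 + eps) * (\<integral>\<^sup>+ y'. \<integral>\<^sup>+ y. pattern_uncovered J b a j (x'(j := y', i := y)) \<partial>obs_law \<partial>obs_law)"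
proof (cases "\<forall>q\<in>R. pattern_at b a q (x' q)")
  case True
  have "i \<in> {..<n}" unfolding U by simp
  then have n: "0 < n" by simp
  have ci: "(if pattern_at b a i y then 1 else (0::ennreal)) = cell_indicator (b i) False y" for y
    using ai unfolding pattern_at_def cell_indicator_def by auto
  have cj: "(if pattern_at b a j y' then 1 else (0::ennreal)) = cell_indicator (b i) (a j) y'" for y'
    using bij unfolding pattern_at_def cell_indicator_def by auto
  have "pattern_uncovered J b a i (x'(j := y', i := y)) = cell_indicator (b i) False y * cell_indicator (b i) (a j) y'
      * uncovered_after_upd J b a i j x' (fst y, fst (snd y)) (fst y', fst (snd y'))"
    and "pattern_uncovered J b a j (x'(j := y', i := y)) = cell_indicator (b i) False y * cell_indicator (b i) (a j) y'
      * uncovered_after_upd J b a i j x' (fst y', fst (snd y')) (fst y, fst (snd y))" for y y'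
    using oracle_uncovered_upd_i[OF ij(1), of J b a x' y' y] oracle_uncovered_upd_j[OF ij(1) J bij, of a x' y' y]
      ci[of y] cj[of y'] True
    unfolding pattern_uncovered_def has_pattern_upd[OF U ij] by (auto split: if_splits)
  then show ?thesis by (simp add: nn_integral_pair_cell_swap_le[OF n measurable_uncovered_after_upd])
next
  case False
  then have "pattern_uncovered J b a c (x'(j := y', i := y)) = 0" for c y y'
    unfolding pattern_uncovered_def has_pattern_upd[OF U ij] by auto
  then show ?thesis by simp
qed

lemma emeasure_uncovered_exchange_le:
  assumes ij: "i < n" "j < n" "i \<noteq> j" and J: "i \<in> J" "j \<in> J" and bij: "b i = b j" and ai: "\<not> a i"
  shows "emeasure sample_law (uncovered_event J b a i) \<le> ennreal (1 + eps) * emeasure sample_law (uncovered_event J b a j)"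
proof -
  interpret obs_law: prob_space obs_law by (rule prob_space_obs_law) (use ij in auto)
  interpret product_sigma_finite "\<lambda>_::nat. obs_law" by unfold_locales
  define R where "R = {..<n} - {i, j}"
  have R: "finite R" "i \<notin> R" "j \<notin> R" and U: "{..<n} = insert i (insert j R)"
    using ij unfolding R_def by auto
  have em: "emeasure sample_law (uncovered_event J b a c)
     = (\<integral>\<^sup>+ x'. \<integral>\<^sup>+ y'. \<integral>\<^sup>+ y. pattern_uncovered J b a c (x'(j := y', i := y)) \<partial>obs_law \<partial>obs_law \<partial>PiM R (\<lambda>_. obs_law))"
    for c
  proof -
    have "emeasure sample_law (uncovered_event J b a c)
        = (\<integral>\<^sup>+ d. indicator (uncovered_event J b a c) d \<partial>sample_law)"
      by simp
    also have "\<dots> = (\<integral>\<^sup>+ d. pattern_uncovered J b a c d \<partial>sample_law)"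
      by (intro nn_integral_cong) (auto simp: pattern_uncovered_def uncovered_event_def indicator_def)
    finally show ?thesis
      unfolding sample_law_def U using R ij(3) by (simp add: product_nn_integral_insert2)
  qed
  have "(\<integral>\<^sup>+ x'. \<integral>\<^sup>+ y'. \<integral>\<^sup>+ y. pattern_uncovered J b a i (x'(j := y', i := y)) \<partial>obs_law \<partial>obs_law \<partial>PiM R (\<lambda>_. obs_law))
    \<le> (\<integral>\<^sup>+ x'. ennreal (1 + eps) * (\<integral>\<^sup>+ y'. \<integral>\<^sup>+ y. pattern_uncovered J b a j (x'(j := y', i := y)) \<partial>obs_law \<partial>obs_law)
          \<partial>PiM R (\<lambda>_. obs_law))"
    using nn_integral_pattern_uncovered_swap_le[of i j R J b a, OF U ij(3) R(2,3) J bij ai] by (intro nn_integral_mono) auto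
  also have "\<dots> = ennreal (1 + eps) * (\<integral>\<^sup>+ x'. \<integral>\<^sup>+ y'. \<integral>\<^sup>+ y. pattern_uncovered J b a j (x'(j := y', i := y))
      \<partial>obs_law \<partial>obs_law \<partial>PiM R (\<lambda>_. obs_law))"
    by (rule nn_integral_cmult) measurable
  finally show ?thesis unfolding em .
qed

lemma measure_uncovered_exchange_le:
  assumes "i < n" "q < n" "i \<in> J" "q \<in> J" "b q = b i" "\<not> a i"
  shows "measure sample_law (uncovered_event J b a i) \<le> (1 + eps) * measure sample_law (uncovered_event J b a q)"
proof (cases "q = i")
  case True then show ?thesis using eps by (simp add: algebra_simps)
next
  case False
  interpret sample_law: prob_space sample_law by (rule prob_space_sample_law) (use assms in auto)
  have "ennreal (measure sample_law (uncovered_event J b a i))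
      \<le> ennreal (1 + eps) * ennreal (measure sample_law (uncovered_event J b a q))"
    using emeasure_uncovered_exchange_le[of i q J b a] assms False
    by (auto simp: sample_law.emeasure_eq_measure)
  also have "\<dots> = ennreal ((1 + eps) * measure sample_law (uncovered_event J b a q))"
    using eps by (simp add: ennreal_mult)
  finally show ?thesis using eps by (subst (asm) ennreal_le_iff) auto
qed

text \<open>Averaging the exchange inequality over the bin of each unobserved index turns the
  uncovered probabilities into their pro_weight-average.\<close>
lemma sum_measure_uncovered_le:
  assumes J: "J \<subseteq> {..<n}" and N0: "0 < Nzero J a"
  shows "(\<Sum>i\<in>{i\<in>J. \<not> a i}. measure sample_law (uncovered_event J b a i))
    \<le> (1 + eps) * real (Nzero J a) * (\<Sum>q\<in>J. pro_weight J b a q * measure sample_law (uncovered_event J b a q))"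
proof -
  let ?P = "\<lambda>q. measure sample_law (uncovered_event J b a q)"
  have fin: "finite J" using J finite_subset by blast
  have "?P i \<le> (1 + eps) * ((\<Sum>q\<in>{q\<in>J. b q = b i}. ?P q) / real (Nbin J b (b i)))"
    if i: "i \<in> J" "\<not> a i" for i
  proof -
    have "real (Nbin J b (b i)) * ?P i = (\<Sum>q\<in>{q\<in>J. b q = b i}. ?P i)" unfolding Nbin_def by simp
    also have "\<dots> \<le> (\<Sum>q\<in>{q\<in>J. b q = b i}. (1 + eps) * ?P q)"
      using i J by (intro sum_mono measure_uncovered_exchange_le) auto
    finally show ?thesis using Nbin_pos[OF fin i(1), of b] by (simp add: field_simps sum_distrib_left)
  qed
  then have "(\<Sum>i\<in>{i\<in>J. \<not> a i}. ?P i)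
      \<le> (\<Sum>i\<in>{i\<in>J. \<not> a i}. (1 + eps) * ((\<Sum>q\<in>{q\<in>J. b q = b i}. ?P q) / real (Nbin J b (b i))))"
    by (intro sum_mono) auto
  also have "\<dots> = (1 + eps) * (\<Sum>q\<in>J. real (Nbin0 J b a (b q)) * ?P q / real (Nbin J b (b q)))"
    unfolding sum_bin_averages_over_unobserved[OF fin, symmetric] sum_distrib_left ..
  also have "(\<Sum>q\<in>J. real (Nbin0 J b a (b q)) * ?P q / real (Nbin J b (b q)))
      = real (Nzero J a) * (\<Sum>q\<in>J. pro_weight J b a q * ?P q)"
    unfolding sum_distrib_left pro_weight_def using N0 by (intro sum.cong refl) (simp add: field_simps)
  finally show ?thesis by (simp add: mult.assoc)
qed

text \<open>On every sample, the indices lying strictly above the oracle quantile carry pro_weight at most alpha.\<close>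
lemma sum_pro_weight_measure_uncovered_le:
  assumes J: "finite J" and N0: "0 < Nzero J a" and n: "0 < n"
  shows "(\<Sum>q\<in>J. pro_weight J b a q * measure sample_law (uncovered_event J b a q))
    \<le> alpha * measure sample_law (pattern_event b a)"
proof -
  interpret sample_law: prob_space sample_law by (rule prob_space_sample_law[OF n])
  have int_unc: "integrable sample_law (indicator (uncovered_event J b a q) :: _ \<Rightarrow> real)" for q
    by (intro integrable_real_indicator) (auto simp: sample_law.emeasure_eq_measure)
  have int_pat: "integrable sample_law (indicator (pattern_event b a) :: _ \<Rightarrow> real)"
    by (intro integrable_real_indicator) (auto simp: sample_law.emeasure_eq_measure)
  have bound: "(\<Sum>q\<in>J. pro_weight J b a q * indicator (uncovered_event J b a q) d) \<le> alpha * indicator (pattern_event b a) d"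
    if d: "d \<in> space sample_law" for d
  proof (cases "has_pattern b a d")
    case True
    have "(\<Sum>q\<in>J. pro_weight J b a q * indicator (uncovered_event J b a q) d)
       = (\<Sum>q\<in>J. if 1 - alpha \<le> (\<Sum>q'\<in>J. if sample_score d q' < sample_score d q then pro_weight J b a q' else 0)
            then pro_weight J b a q else 0)"
      using d True by (intro sum.cong refl) (auto simp: indicator_def oracle_uncovered_def uncovered_event_def)
    also have "\<dots> \<le> 1 - (1 - alpha)"
      using sum_pro_weight[OF J N0] alpha
      by (intro sum_weight_of_high_ranks_le[OF J pro_weight_nonneg]) auto
    finally show ?thesis using d True by (simp add: pattern_event_def)
  next
    case False
    then show ?thesis using alpha by (simp add: pattern_event_def uncovered_event_def indicator_def)
  qed
  have "(\<Sum>q\<in>J. pro_weight J b a q * measure sample_law (uncovered_event J b a q))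
      = (\<integral>d. (\<Sum>q\<in>J. pro_weight J b a q * indicator (uncovered_event J b a q) d) \<partial>sample_law)"
    using int_unc by (subst Bochner_Integration.integral_sum) auto
  also have "\<dots> \<le> (\<integral>d. alpha * indicator (pattern_event b a) d \<partial>sample_law)"
    using int_unc int_pat bound by (intro Bochner_Integration.integral_mono) auto
  also have "\<dots> = alpha * measure sample_law (pattern_event b a)"
    by simp
  finally show ?thesis .
qed

lemma measure_pattern_le_covered_uncovered:
  assumes J: "finite J" and n: "0 < n"
  shows "measure sample_law (pattern_event b a)
    \<le> measure sample_law (covered_event J b a i) + measure sample_law (uncovered_event J b a i)"
proof -
  interpret sample_law: prob_space sample_law by (rule prob_space_sample_law[OF n])
  have "oracle_uncovered J b a d i" if "\<not> covered J b a d i" for d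
  proof -
    have "(\<Sum>q\<in>{q\<in>J. a q}. if sample_score d q < sample_score d i then pro_weight J b a q else 0)
      \<le> (\<Sum>q\<in>J. if sample_score d q < sample_score d i then pro_weight J b a q else 0)"
      by (rule sum_mono2[OF J]) (auto simp: pro_weight_nonneg)
    then show ?thesis using that unfolding covered_def oracle_uncovered_def by linarith
  qed
  then have "pattern_event b a \<subseteq> covered_event J b a i \<union> uncovered_event J b a i"
    unfolding pattern_event_def covered_event_def uncovered_event_def by blast
  then have "measure sample_law (pattern_event b a) \<le> measure sample_law (covered_event J b a i \<union> uncovered_event J b a i)"
    by (rule sample_law.finite_measure_mono) measurable
  also have "\<dots> \<le> measure sample_law (covered_event J b a i) + measure sample_law (uncovered_event J b a i)"
    by (rule measure_Un_le) measurable
  finally show ?thesis .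
qed

lemma coverage_on_pattern:
  assumes J: "J \<subseteq> {..<n}"
  shows "(1 - alpha - eps) * real (Nzero J a) * measure sample_law (pattern_event b a)
     \<le> (\<Sum>i\<in>{i\<in>J. \<not> a i}. measure sample_law (covered_event J b a i))"
proof (cases "{i\<in>J. \<not> a i} = {}")
  case False
  then obtain i0 where i0: "i0 \<in> J" "\<not> a i0" by auto
  have fin: "finite J" using J finite_subset by blast
  then have N0: "0 < Nzero J a" unfolding Nzero_def using i0 by (auto simp: card_gt_0_iff)
  have n: "0 < n" using i0 J by auto
  let ?PE = "measure sample_law (pattern_event b a)"
  let ?unc = "\<lambda>i. measure sample_law (uncovered_event J b a i)"
  have "(\<Sum>i\<in>{i\<in>J. \<not> a i}. ?unc i) \<le> (1 + eps) * real (Nzero J a) * (alpha * ?PE)"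
    using sum_measure_uncovered_le[OF J N0, of b] sum_pro_weight_measure_uncovered_le[OF fin N0 n, of b] eps
    by (smt (verit) mult_left_mono of_nat_0_le_iff mult_nonneg_nonneg)
  also have "\<dots> \<le> (alpha + eps) * real (Nzero J a) * ?PE"
    using alpha eps mult_right_mono[of "(1 + eps) * alpha" "alpha + eps" "real (Nzero J a) * ?PE"]
    by (simp add: algebra_simps)
  finally have "real (Nzero J a) * ?PE - (\<Sum>i\<in>{i\<in>J. \<not> a i}. ?unc i) \<ge> (1 - alpha - eps) * real (Nzero J a) * ?PE"
    by (simp add: algebra_simps)
  also have "real (Nzero J a) * ?PE - (\<Sum>i\<in>{i\<in>J. \<not> a i}. ?unc i) = (\<Sum>i\<in>{i\<in>J. \<not> a i}. ?PE - ?unc i)"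
    by (simp add: sum_subtractf Nzero_def)
  also have "\<dots> \<le> (\<Sum>i\<in>{i\<in>J. \<not> a i}. measure sample_law (covered_event J b a i))"
    using measure_pattern_le_covered_uncovered[OF fin n] by (intro sum_mono) (simp add: algebra_simps)
  finally show ?thesis .
next
  case True
  then show ?thesis unfolding Nzero_def by (simp only: True card.empty sum.empty)
qed

definition sample :: "'w \<Rightarrow> nat \<Rightarrow> 'x \<times> 'y \<times> bool" where
  "sample \<omega> = (\<lambda>q\<in>{..<n}. obs q \<omega>)"

lemma sample_eq: "sample = (\<lambda>\<omega>. \<lambda>i\<in>{..<n}. (X i \<omega>, Y i \<omega>, A i \<omega>))"
  by (simp add: sample_def obs_def fun_eq_iff)

lemma measurable_sample_PiM: "sample \<in> measurable M (PiM {..<n} (\<lambda>_. MXYA))"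
  unfolding sample_def by (intro measurable_restrict measurable_obs) auto

lemma sets_sample_law: "sets sample_law = sets (PiM {..<n} (\<lambda>_. MXYA))"
  unfolding sample_law_def by (intro sets_PiM_cong) (auto simp: sets_obs_law)

lemma measurable_sample: "sample \<in> measurable M sample_law"
  using measurable_sample_PiM by (simp add: measurable_cong_sets[OF refl sets_sample_law])

lemma distr_sample: "0 < n \<Longrightarrow> distr M sample_law sample = sample_law"
proof -
  assume n: "0 < n"
  interpret prob_space M by (rule P)
  have "distr M (PiM {..<n} (\<lambda>_. MXYA)) (\<lambda>\<omega>. \<lambda>i\<in>{..<n}. obs i \<omega>) = PiM {..<n} (\<lambda>i. distr M MXYA (obs i))"
    using indep_vars_iff_distr_eq_PiM'[where I="{..<n}" and M'="\<lambda>_. MXYA" and X=obs] measurable_obs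
      iid_indep n unfolding obs_def[abs_def] by auto
  also have "\<dots> = sample_law" unfolding sample_law_def obs_law_def
  proof (intro PiM_cong refl)
    fix i assume "i \<in> {..<n}"
    then show "distr M MXYA (obs i) = distr M MXYA (obs 0)"
      using iid_ident[of i 0] n unfolding obs_def[abs_def] by auto
  qed
  finally have "distr M (PiM {..<n} (\<lambda>_. MXYA)) sample = sample_law" unfolding sample_def[abs_def] .
  then show ?thesis by (simp add: distr_cong[OF refl sets_sample_law[symmetric]])
qed

lemma measure_vimage_sample:
  assumes "0 < n" "T \<in> sets sample_law"
  shows "measure M (sample -` T \<inter> space M) = measure sample_law T"
  using measure_distr[OF measurable_sample assms(2)] distr_sample[OF assms(1)] by simp

definition pattern_set :: "(nat \<Rightarrow> int) \<Rightarrow> (nat \<Rightarrow> bool) \<Rightarrow> 'w set" where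
  "pattern_set b a = {\<omega> \<in> space M. \<forall>i<n. bin_of eps (p (X i \<omega>)) = b i \<and> A i \<omega> = a i}"

lemma vimage_pattern_event: "sample -` pattern_event b a \<inter> space M = pattern_set b a"
  using measurable_space[OF measurable_sample]
  by (auto simp: pattern_event_def pattern_set_def has_pattern_def pattern_at_def sample_def obs_def)

lemma sets_pattern_set[measurable]: "pattern_set b a \<in> events"
  using measurable_sets[OF measurable_sample sets_pattern_event] vimage_pattern_event by metis

lemma mem_C_pro_iff_covered:
  assumes Ev: "\<forall>q<n. bin_of eps (p (X q \<omega>)) = b q \<and> A q \<omega> = a q"
    and J: "J \<subseteq> {..<n}" and i: "i < n"
  shows "Y i \<omega> \<in> C_pro alpha J (\<lambda>i. bin_of eps (p (X i \<omega>))) (\<lambda>i. A i \<omega>) (\<lambda>i. s (X i \<omega>) (Y i \<omega>)) s (X i \<omega>)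
     \<longleftrightarrow> covered J b a (sample \<omega>) i"
proof -
  have fin: "finite J" using J finite_subset by blast
  have score: "sample_score (sample \<omega>) q = s (X q \<omega>) (Y q \<omega>)" if "q < n" for q
    using that by (simp add: sample_score_def sample_def obs_def)
  have "pro_thr alpha J (\<lambda>i. bin_of eps (p (X i \<omega>))) (\<lambda>i. A i \<omega>) (\<lambda>i. s (X i \<omega>) (Y i \<omega>))
      = pro_thr alpha J b a (sample_score (sample \<omega>))"
    by (rule pro_thr_cong) (use J Ev score in auto)
  then show ?thesis
    unfolding C_pro_def covered_def using ereal_le_pro_thr_iff[OF fin alpha(2)] score[OF i] by simp
qed

end

section \<open>Averaging over the random partition\<close>

text \<open>The partition U is given by the labels g (B_{1:n}) (A_{1:n}) xi, with xi independent of the data.\<close>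
locale mar_partition = mar_sample M MX MY X Y A p s n alpha eps
  for M :: "'w measure" and MX :: "'x measure" and MY :: "'y measure"
    and X :: "nat \<Rightarrow> 'w \<Rightarrow> 'x" and Y :: "nat \<Rightarrow> 'w \<Rightarrow> 'y" and A :: "nat \<Rightarrow> 'w \<Rightarrow> bool"
    and p :: "'x \<Rightarrow> real" and s :: "'x \<Rightarrow> 'y \<Rightarrow> real" and n :: nat and alpha eps :: real +
  fixes MR :: "'r measure" and xi :: "'w \<Rightarrow> 'r"
    and g :: "(nat \<Rightarrow> int) \<Rightarrow> (nat \<Rightarrow> bool) \<Rightarrow> 'r \<Rightarrow> nat \<Rightarrow> nat"
  assumes xi_rv: "xi \<in> measurable M MR"
    and xi_indep: "prob_space.indep_set M
        (sets (vimage_algebra (space M) (\<lambda>\<omega>. \<lambda>i\<in>{..<n}. (X i \<omega>, Y i \<omega>, A i \<omega>))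
           (\<Pi>\<^sub>M i\<in>{..<n}. MX \<Otimes>\<^sub>M MY \<Otimes>\<^sub>M count_space (UNIV :: bool set))))
        (sets (vimage_algebra (space M) xi MR))"
    and g_meas: "\<And>b a i. (\<lambda>r. g b a r i) \<in> measurable MR (count_space UNIV)"
begin

interpretation prob_space M by (rule P)

lemmas [measurable] = g_meas

text \<open>The block U_{l_i}, with the observed bins and missingness indicators replaced by b and a;
  they agree on pattern_set b a.\<close>
definition block :: "(nat \<Rightarrow> int) \<Rightarrow> (nat \<Rightarrow> bool) \<Rightarrow> 'r \<Rightarrow> nat \<Rightarrow> nat set" where
  "block b a r i = {j\<in>{..<n}. g (restrict b {..<n}) (restrict a {..<n}) r j = g (restrict b {..<n}) (restrict a {..<n}) r i}"

definition coverage_proportion :: "'w \<Rightarrow> real" where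
  "coverage_proportion \<omega> = cov_U alpha n (g (\<lambda>i\<in>{..<n}. bin_of eps (p (X i \<omega>))) (\<lambda>i\<in>{..<n}. A i \<omega>) (xi \<omega>))
     (\<lambda>i. bin_of eps (p (X i \<omega>))) (\<lambda>i. A i \<omega>) s (\<lambda>i. X i \<omega>) (\<lambda>i. Y i \<omega>)"

lemma block_eq_if_mem: "j \<in> block b a r i \<Longrightarrow> block b a r j = block b a r i"
  unfolding block_def by auto

definition block_event :: "(nat \<Rightarrow> int) \<Rightarrow> (nat \<Rightarrow> bool) \<Rightarrow> nat \<Rightarrow> nat set \<Rightarrow> 'w set" where
  "block_event b a i U = {\<omega> \<in> space M. block b a (xi \<omega>) i = U}"

definition cover_event :: "(nat \<Rightarrow> int) \<Rightarrow> (nat \<Rightarrow> bool) \<Rightarrow> nat \<Rightarrow> nat set \<Rightarrow> 'w set" where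
  "cover_event b a i U = sample -` covered_event (U \<union> {q\<in>{..<n}. a q}) b a i \<inter> space M"

lemma block_event_eq_vimage:
  assumes U: "U \<subseteq> {..<n}"
  obtains R where "R \<in> sets MR" "block_event b a i U = xi -` R \<inter> space M"
proof
  let ?g = "g (restrict b {..<n}) (restrict a {..<n})"
  show "{r \<in> space MR. (\<forall>j\<in>U. ?g r j = ?g r i) \<and> (\<forall>j\<in>{..<n} - U. ?g r j \<noteq> ?g r i)} \<in> sets MR"
    by measurable
  show "block_event b a i U
      = xi -` {r \<in> space MR. (\<forall>j\<in>U. ?g r j = ?g r i) \<and> (\<forall>j\<in>{..<n} - U. ?g r j \<noteq> ?g r i)} \<inter> space M"
    using U measurable_space[OF xi_rv] unfolding block_event_def block_def by auto
qed

lemma block_event_in_vimage_xi: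
  assumes U: "U \<subseteq> {..<n}"
  shows "block_event b a i U \<in> sets (vimage_algebra (space M) xi MR)"
proof -
  obtain R where "R \<in> sets MR" "block_event b a i U = xi -` R \<inter> space M"
    using block_event_eq_vimage[OF U] .
  moreover have "xi \<in> space M \<rightarrow> space MR" using measurable_space[OF xi_rv] by auto
  ultimately show ?thesis by (auto simp: sets_vimage_algebra2)
qed

lemma cover_event_in_vimage_sample:
  "cover_event b a i U \<in> sets (vimage_algebra (space M) sample (\<Pi>\<^sub>M i\<in>{..<n}. MXYA))"
proof -
  have "covered_event (U \<union> {q\<in>{..<n}. a q}) b a i \<in> sets (\<Pi>\<^sub>M i\<in>{..<n}. MXYA)"
    using sets_covered_event sets_sample_law by blast
  then show ?thesis
    unfolding cover_event_def using measurable_space[OF measurable_sample_PiM]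
    by (auto simp: sets_vimage_algebra2)
qed

lemma measure_block_cover_event:
  assumes U: "U \<subseteq> {..<n}" and n: "0 < n"
  shows "measure M (block_event b a i U \<inter> cover_event b a i U)
    = measure M (block_event b a i U) * measure sample_law (covered_event (U \<union> {q\<in>{..<n}. a q}) b a i)"
  using indep_setD[OF xi_indep[folded sample_eq] cover_event_in_vimage_sample block_event_in_vimage_xi[OF U]]
    measure_vimage_sample[OF n sets_covered_event]
  by (simp add: Int_commute cover_event_def)

lemma sets_block_event[measurable]:
  assumes "U \<subseteq> {..<n}"
  shows "block_event b a i U \<in> events"
proof -
  obtain R where "R \<in> sets MR" "block_event b a i U = xi -` R \<inter> space M"
    using block_event_eq_vimage[OF assms] .
  then show ?thesis using measurable_sets[OF xi_rv] by simp
qed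

lemma sets_cover_event[measurable]: "cover_event b a i U \<in> events"
  unfolding cover_event_def by (rule measurable_sets[OF measurable_sample sets_covered_event])

lemma sum_measure_block_event:
  assumes i: "i < n"
  shows "(\<Sum>U\<in>Pow {..<n}. measure M (block_event b a i U)) = 1"
proof -
  have "block_event b a i U \<inter> space M = block_event b a i U" for U
    by (auto simp: block_event_def)
  then have "(\<Sum>U\<in>Pow {..<n}. measure M (block_event b a i U))
      = (\<Sum>U\<in>Pow {..<n}. \<integral>\<omega>. indicator (block_event b a i U) \<omega> \<partial>M)"
    by simp
  also have "\<dots> = (\<integral>\<omega>. (\<Sum>U\<in>Pow {..<n}. indicator (block_event b a i U) \<omega>) \<partial>M)"
    by (rule Bochner_Integration.integral_sum[symmetric])
      (auto intro!: integrable_real_indicator simp: emeasure_eq_measure)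
  also have "\<dots> = (\<integral>\<omega>. 1 \<partial>M)"
  proof (intro Bochner_Integration.integral_cong refl)
    fix \<omega> assume "\<omega> \<in> space M"
    then have "(\<Sum>U\<in>Pow {..<n}. indicator (block_event b a i U) \<omega>) = (\<Sum>U\<in>Pow {..<n}. if U = block b a (xi \<omega>) i then 1 else (0::real))"
      unfolding block_event_def by (intro sum.cong refl) (auto simp: indicator_def)
    also have "\<dots> = 1" by (auto simp: block_def)
    finally show "(\<Sum>U\<in>Pow {..<n}. indicator (block_event b a i U) \<omega>) = (1::real)" .
  qed
  finally show ?thesis by (simp add: prob_space)
qed

lemma cov_U_indicator_eq:
  fixes b :: "nat \<Rightarrow> int" and a :: "nat \<Rightarrow> bool"
  assumes w: "\<omega> \<in> space M"
  defines "I0 \<equiv> {i\<in>{..<n}. \<not> a i}"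
  shows "coverage_proportion \<omega> * indicator (pattern_set b a) \<omega>
    = (if I0 = {} then indicator (pattern_set b a) \<omega>
       else (1 / real (card I0)) * (\<Sum>i\<in>I0. \<Sum>U\<in>Pow {..<n}. indicator (block_event b a i U \<inter> cover_event b a i U) \<omega>))"
proof (cases "\<omega> \<in> pattern_set b a")
  case False
  then have "\<omega> \<notin> cover_event b a i U" for i U
    using vimage_pattern_event w unfolding cover_event_def covered_event_def pattern_event_def by blast
  then show ?thesis using False by (auto simp: indicator_def)
next
  case True
  then have Ev: "\<forall>q<n. bin_of eps (p (X q \<omega>)) = b q \<and> A q \<omega> = a q" unfolding pattern_set_def by auto
  define I1 where "I1 = {i\<in>{..<n}. a i}"
  have restr: "(\<lambda>i\<in>{..<n}. bin_of eps (p (X i \<omega>))) = restrict b {..<n}" "(\<lambda>i\<in>{..<n}. A i \<omega>) = restrict a {..<n}"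
    using Ev by (auto simp: fun_eq_iff)
  have I0w: "{i \<in> {..<n}. \<not> A i \<omega>} = I0" and I1w: "{i \<in> {..<n}. A i \<omega>} = I1"
    using Ev unfolding I0_def I1_def by auto
  have sample_pattern: "sample \<omega> \<in> pattern_event b a" using True vimage_pattern_event by blast
  have "(\<Sum>U\<in>Pow {..<n}. indicator (block_event b a i U \<inter> cover_event b a i U) \<omega>)
      = (\<Sum>U\<in>Pow {..<n}. if U = block b a (xi \<omega>) i then (if covered (U \<union> I1) b a (sample \<omega>) i then 1 else 0) else (0::real))"
    for i using w sample_pattern
    by (intro sum.cong refl) (auto simp: indicator_def block_event_def cover_event_def covered_event_def
        pattern_event_def I1_def)
  also have "\<dots> i = (if covered (block b a (xi \<omega>) i \<union> I1) b a (sample \<omega>) i then 1 else 0)" for i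
    by (auto simp: block_def)
  also have "\<dots> i = (if Y i \<omega> \<in> C_pro alpha (block b a (xi \<omega>) i \<union> I1) (\<lambda>i. bin_of eps (p (X i \<omega>))) (\<lambda>i. A i \<omega>)
      (\<lambda>i. s (X i \<omega>) (Y i \<omega>)) s (X i \<omega>) then 1 else 0)" if "i \<in> I0" for i
    using that mem_C_pro_iff_covered[OF Ev, of "block b a (xi \<omega>) i \<union> I1" i]
    by (auto simp: block_def I1_def I0_def)
  finally show ?thesis
    unfolding coverage_proportion_def cov_U_def Let_def restr I0w I1w using True
    by (auto simp: block_def I1_def intro!: sum.cong)
qed

lemma integral_coverage_proportion:
  fixes b :: "nat \<Rightarrow> int" and a :: "nat \<Rightarrow> bool"
  defines "I0 \<equiv> {i\<in>{..<n}. \<not> a i}"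
  assumes I0: "I0 \<noteq> {}"
  shows "(\<integral>\<omega>. coverage_proportion \<omega> * indicator (pattern_set b a) \<omega> \<partial>M)
    = (1 / real (card I0)) * (\<Sum>i\<in>I0. \<Sum>U\<in>Pow {..<n}.
        measure M (block_event b a i U) * measure sample_law (covered_event (U \<union> {q\<in>{..<n}. a q}) b a i))"
proof -
  have n: "0 < n" using I0 unfolding I0_def by auto
  let ?BC = "\<lambda>i U. block_event b a i U \<inter> cover_event b a i U"
  have BC_space: "?BC i U \<inter> space M = ?BC i U" for i U by (auto simp: block_event_def)
  have int: "integrable M (indicator (?BC i U) :: _ \<Rightarrow> real)" if "U \<in> Pow {..<n}" for i U
    using that by (intro integrable_real_indicator) (auto simp: emeasure_eq_measure)
  have "(\<integral>\<omega>. coverage_proportion \<omega> * indicator (pattern_set b a) \<omega> \<partial>M)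
      = (\<integral>\<omega>. (1 / real (card I0)) * (\<Sum>i\<in>I0. \<Sum>U\<in>Pow {..<n}. indicator (?BC i U) \<omega>) \<partial>M)"
    using cov_U_indicator_eq[where b=b and a=a] I0 unfolding I0_def
    by (intro Bochner_Integration.integral_cong) auto
  also have "\<dots> = (1 / real (card I0)) * (\<Sum>i\<in>I0. \<Sum>U\<in>Pow {..<n}. \<integral>\<omega>. indicator (?BC i U) \<omega> \<partial>M)"
  proof -
    have "(\<integral>\<omega>. (\<Sum>i\<in>I0. \<Sum>U\<in>Pow {..<n}. indicator (?BC i U) \<omega> :: real) \<partial>M)
        = (\<Sum>i\<in>I0. \<integral>\<omega>. (\<Sum>U\<in>Pow {..<n}. indicator (?BC i U) \<omega>) \<partial>M)"
      by (rule Bochner_Integration.integral_sum) (auto intro!: Bochner_Integration.integrable_sum int)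
    also have "\<dots> = (\<Sum>i\<in>I0. \<Sum>U\<in>Pow {..<n}. \<integral>\<omega>. indicator (?BC i U) \<omega> \<partial>M)"
      by (intro sum.cong refl Bochner_Integration.integral_sum) (auto intro: int)
    finally show ?thesis by simp
  qed
  also have "\<dots> = (1 / real (card I0)) * (\<Sum>i\<in>I0. \<Sum>U\<in>Pow {..<n}.
        measure M (block_event b a i U) * measure sample_law (covered_event (U \<union> {q\<in>{..<n}. a q}) b a i))"
    using BC_space measure_block_cover_event[OF _ n] by simp
  finally show ?thesis .
qed

lemma sum_block_cover_ge:
  fixes b :: "nat \<Rightarrow> int" and a :: "nat \<Rightarrow> bool"
  defines "I0 \<equiv> {i\<in>{..<n}. \<not> a i}"
  shows "(1 - alpha - eps) * measure sample_law (pattern_event b a) * real (card I0)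
    \<le> (\<Sum>i\<in>I0. \<Sum>U\<in>Pow {..<n}.
        measure M (block_event b a i U) * measure sample_law (covered_event (U \<union> {q\<in>{..<n}. a q}) b a i))"
proof (rule sum_over_blocks_ge)
  show "measure M (block_event b a i U) = 0" if "i \<in> I0" "i \<notin> U" for i U
  proof -
    have "block_event b a i U = {}" using that unfolding block_event_def block_def I0_def by auto
    then show ?thesis by simp
  qed
  show "measure M (block_event b a i U) = measure M (block_event b a i' U)" if "i \<in> U" "i' \<in> U" for i i' U
  proof -
    have "block b a r i = U \<longleftrightarrow> block b a r i' = U" for r
      using that block_eq_if_mem by metis
    then show ?thesis unfolding block_event_def by simp
  qed
  show "(\<Sum>U\<in>Pow {..<n}. measure M (block_event b a i U)) = 1" if "i \<in> I0" for i
    using that sum_measure_block_event unfolding I0_def by auto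
  show "(1 - alpha - eps) * measure sample_law (pattern_event b a) * real (card (U \<inter> I0))
      \<le> (\<Sum>i\<in>U \<inter> I0. measure sample_law (covered_event (U \<union> {q\<in>{..<n}. a q}) b a i))"
    if "U \<in> Pow {..<n}" for U
  proof -
    have J: "U \<union> {q\<in>{..<n}. a q} \<subseteq> {..<n}" using that by auto
    have "{i \<in> U \<union> {q\<in>{..<n}. a q}. \<not> a i} = U \<inter> I0" using that unfolding I0_def by auto
    then show ?thesis
      using coverage_on_pattern[OF J, where a=a and b=b] unfolding Nzero_def by (simp add: ac_simps)
  qed
qed (auto simp: I0_def)

lemma coverage_on_pattern_set:
  "(1 - alpha - eps) * measure M (pattern_set b a)
    \<le> (\<integral>\<omega>. coverage_proportion \<omega> * indicator (pattern_set b a) \<omega> \<partial>M)"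
proof (cases "{i\<in>{..<n}. \<not> a i} = {}")
  case True
  then have "(\<integral>\<omega>. coverage_proportion \<omega> * indicator (pattern_set b a) \<omega> \<partial>M)
      = (\<integral>\<omega>. indicator (pattern_set b a) \<omega> \<partial>M)"
    using cov_U_indicator_eq[where b=b and a=a] by (intro Bochner_Integration.integral_cong) auto
  also have "\<dots> = measure M (pattern_set b a)" by (simp add: Int_absorb2 pattern_set_def)
  finally show ?thesis
    using alpha eps mult_right_mono[of "1 - alpha - eps" 1 "measure M (pattern_set b a)"] by simp
next
  case False
  then have n: "0 < n" by auto
  have "measure M (pattern_set b a) = measure sample_law (pattern_event b a)"
    using measure_vimage_sample[OF n sets_pattern_event, of b a] unfolding vimage_pattern_event .
  moreover have "0 < real (card {i\<in>{..<n}. \<not> a i})" using False by (simp add: card_gt_0_iff)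
  ultimately show ?thesis
    using sum_block_cover_ge[where a=a and b=b] integral_coverage_proportion[OF False]
    by (simp add: le_divide_eq)
qed

end

theorem mainTheorem5:
  fixes M :: "'w measure" and MX :: "'x measure" and MY :: "'y measure" and MR :: "'r measure"
    and X :: "nat \<Rightarrow> 'w \<Rightarrow> 'x" and Y :: "nat \<Rightarrow> 'w \<Rightarrow> 'y" and A :: "nat \<Rightarrow> 'w \<Rightarrow> bool"
    and xi :: "'w \<Rightarrow> 'r"
    and p :: "'x \<Rightarrow> real" and s :: "'x \<Rightarrow> 'y \<Rightarrow> real"
    and g :: "(nat \<Rightarrow> int) \<Rightarrow> (nat \<Rightarrow> bool) \<Rightarrow> 'r \<Rightarrow> nat \<Rightarrow> nat"
    and n :: nat and alpha eps :: real
  assumes P: "prob_space M"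
    and alpha: "0 < alpha" "alpha < 1" and eps: "0 < eps"
    and p_meas: "p \<in> borel_measurable MX"
    and p_range: "\<And>x. 0 < p x \<and> p x < 1"
    and s_meas: "(\<lambda>(x, y). s x y) \<in> borel_measurable (MX \<Otimes>\<^sub>M MY)"
    and X_rv: "\<And>i. i < n \<Longrightarrow> X i \<in> measurable M MX"
    and Y_rv: "\<And>i. i < n \<Longrightarrow> Y i \<in> measurable M MY"
    and A_rv: "\<And>i. i < n \<Longrightarrow> A i \<in> measurable M (count_space (UNIV :: bool set))"
    and xi_rv: "xi \<in> measurable M MR"
    and iid_indep: "prob_space.indep_vars M (\<lambda>_. MX \<Otimes>\<^sub>M MY \<Otimes>\<^sub>M count_space (UNIV :: bool set))
                      (\<lambda>i \<omega>. (X i \<omega>, Y i \<omega>, A i \<omega>)) {..<n}"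
    and iid_ident: "\<And>i j. i < n \<Longrightarrow> j < n \<Longrightarrow>
        distr M (MX \<Otimes>\<^sub>M MY \<Otimes>\<^sub>M count_space (UNIV :: bool set)) (\<lambda>\<omega>. (X i \<omega>, Y i \<omega>, A i \<omega>))
      = distr M (MX \<Otimes>\<^sub>M MY \<Otimes>\<^sub>M count_space (UNIV :: bool set)) (\<lambda>\<omega>. (X j \<omega>, Y j \<omega>, A j \<omega>))"
    and mar: "\<And>i S. i < n \<Longrightarrow> S \<in> sets (MX \<Otimes>\<^sub>M MY) \<Longrightarrow>
        measure M {\<omega> \<in> space M. A i \<omega> \<and> (X i \<omega>, Y i \<omega>) \<in> S}
      = (\<integral>\<omega>. indicator S (X i \<omega>, Y i \<omega>) * p (X i \<omega>) \<partial>M)"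
    and xi_indep: "prob_space.indep_set M
        (sets (vimage_algebra (space M) (\<lambda>\<omega>. \<lambda>i\<in>{..<n}. (X i \<omega>, Y i \<omega>, A i \<omega>))
           (\<Pi>\<^sub>M i\<in>{..<n}. MX \<Otimes>\<^sub>M MY \<Otimes>\<^sub>M count_space (UNIV :: bool set))))
        (sets (vimage_algebra (space M) xi MR))"
    and g_meas: "\<And>b a i. (\<lambda>r. g b a r i) \<in> measurable MR (count_space UNIV)"
  shows "\<forall>(b :: nat \<Rightarrow> int) (a :: nat \<Rightarrow> bool).
     (1 - alpha - eps) *
       measure M {\<omega> \<in> space M. \<forall>i<n. bin_of eps (p (X i \<omega>)) = b i \<and> A i \<omega> = a i}
     \<le> (\<integral>\<omega>. cov_U alpha n
              (g (\<lambda>i\<in>{..<n}. bin_of eps (p (X i \<omega>))) (\<lambda>i\<in>{..<n}. A i \<omega>) (xi \<omega>))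
              (\<lambda>i. bin_of eps (p (X i \<omega>))) (\<lambda>i. A i \<omega>) s (\<lambda>i. X i \<omega>) (\<lambda>i. Y i \<omega>)
            * indicator {\<omega> \<in> space M. \<forall>i<n. bin_of eps (p (X i \<omega>)) = b i \<and> A i \<omega> = a i} \<omega>
          \<partial>M)"
proof -
  interpret mar_partition M MX MY X Y A p s n alpha eps MR xi g
    by (intro mar_partition.intro mar_sample.intro mar_partition_axioms.intro)
      (fact P alpha eps p_meas p_range s_meas X_rv Y_rv A_rv iid_indep iid_ident mar xi_rv xi_indep g_meas)+
  show ?thesis using coverage_on_pattern_set unfolding coverage_proportion_def pattern_set_def by blast
qed

end
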